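(* Every nonzero finite-dimensional left $\mathcal{O}_{nc}(B^+)$-comodule $W$ contains a semi-invariant, i.e. a nonzero $w\in W$ with coaction $w\mapsto g\otimes w$ for some grouplike element $g\in\mathcal{O}_{nc}(B^+)$; moreover $g$ can be taken of the form $a^id^j$.
   Context: $\mathcal{O}_{nc}(\mathrm{GL}_2)$ is the Hopf algebra generated by $a,b,c,d,\delta,\delta^{-1}$ with relations $ac=ca$, $bd=db$, $ad-cb=\delta=da-bc$, $\delta\delta^{-1}=1=\delta^{-1}\delta$, $a\delta^{-1}d-b\delta^{-1}c=1=d\delta^{-1}a-c\delta^{-1}b$, $b\delta^{-1}a=a\delta^{-1}b$, $c\delta^{-1}d=d\delta^{-1}c$, with $\Delta(a)=a\otimes a+b\otimes c$, $\Delta(b)=a\otimes b+b\otimes d$, $\Delta(c)=c\otimes a+d\otimes c$, $\Delta(d)=c\otimes b+d\otimes d$, $\Delta(\delta^{\pm1})=\delta^{\pm1}\otimes\delta^{\pm1}$. $\mathcal{O}_{nc}(B^+):=\mathcal{O}_{nc}(\mathrm{GL}_2)/(c)$, a quotient Hopf algebra in which the images of $a,d$ are invertible grouplike elements and $\Delta(b)=a\otimes b+b\otimes d$. $k$ algebraically closed. *)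

theory Defs
  imports "HOL-Computational_Algebra.Polynomial"
begin

datatype gen = GA | GB | GC | GD | GDel | GDelInv

text \<open>Elements of the free algebra: functions from words to coefficients (finitely supported).
  Elements of the tensor square of the free algebra: functions on pairs of words.\<close>
type_synonym 'k fa = "gen list \<Rightarrow> 'k"
type_synonym 'k fa2 = "gen list \<times> gen list \<Rightarrow> 'k"

definition fsupp :: "('a \<Rightarrow> 'k::zero) \<Rightarrow> bool" where
  "fsupp f \<longleftrightarrow> finite {x. f x \<noteq> 0}"

definition fa_add :: "('a \<Rightarrow> 'k::field) \<Rightarrow> ('a \<Rightarrow> 'k) \<Rightarrow> ('a \<Rightarrow> 'k)" where
  "fa_add f g = (\<lambda>w. f w + g w)"

definition fa_sub :: "('a \<Rightarrow> 'k::field) \<Rightarrow> ('a \<Rightarrow> 'k) \<Rightarrow> ('a \<Rightarrow> 'k)" where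
  "fa_sub f g = (\<lambda>w. f w - g w)"

definition fa_mult :: "'k::field fa \<Rightarrow> 'k fa \<Rightarrow> 'k fa" where
  "fa_mult f g = (\<lambda>w. \<Sum>i\<le>length w. f (take i w) * g (drop i w))"

definition fa_word :: "gen list \<Rightarrow> 'k::field fa" where
  "fa_word u = (\<lambda>w. if w = u then 1 else 0)"

abbreviation fa_one :: "'k::field fa" where "fa_one \<equiv> fa_word []"

text \<open>Defining relations of O_nc(GL_2) (as elements lhs - rhs), plus c for the quotient B+.\<close>
definition bplus_rels :: "'k::field fa set" where
  "bplus_rels = {
     fa_sub (fa_word [GA,GC]) (fa_word [GC,GA]),
     fa_sub (fa_word [GB,GD]) (fa_word [GD,GB]),
     fa_sub (fa_sub (fa_word [GA,GD]) (fa_word [GC,GB])) (fa_word [GDel]),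
     fa_sub (fa_sub (fa_word [GD,GA]) (fa_word [GB,GC])) (fa_word [GDel]),
     fa_sub (fa_word [GDel,GDelInv]) fa_one,
     fa_sub (fa_word [GDelInv,GDel]) fa_one,
     fa_sub (fa_sub (fa_word [GA,GDelInv,GD]) (fa_word [GB,GDelInv,GC])) fa_one,
     fa_sub (fa_sub (fa_word [GD,GDelInv,GA]) (fa_word [GC,GDelInv,GB])) fa_one,
     fa_sub (fa_word [GB,GDelInv,GA]) (fa_word [GA,GDelInv,GB]),
     fa_sub (fa_word [GC,GDelInv,GD]) (fa_word [GD,GDelInv,GC]),
     fa_word [GC] }"

inductive_set ideal_gen :: "'k::field fa set \<Rightarrow> 'k fa set" for R where
  zero: "(\<lambda>_. 0) \<in> ideal_gen R"
| gen: "r \<in> R \<Longrightarrow> fsupp x \<Longrightarrow> fsupp y \<Longrightarrow> fa_mult (fa_mult x r) y \<in> ideal_gen R"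
| add: "f \<in> ideal_gen R \<Longrightarrow> g \<in> ideal_gen R \<Longrightarrow> fa_add f g \<in> ideal_gen R"

definition Bideal :: "'k::field fa set" where
  "Bideal = ideal_gen bplus_rels"

text \<open>Equality in O_nc(B+) of two representatives.\<close>
definition Heq :: "'k::field fa \<Rightarrow> 'k fa \<Rightarrow> bool" where
  "Heq f g \<longleftrightarrow> fa_sub f g \<in> Bideal"

definition fa_tensor :: "'k::field fa \<Rightarrow> 'k fa \<Rightarrow> 'k fa2" where
  "fa_tensor f g = (\<lambda>(u, v). f u * g v)"

text \<open>Kernel of F (x) F -> H (x) H, namely I (x) F + F (x) I.\<close>
inductive_set tensor_ideal :: "'k::field fa set \<Rightarrow> 'k fa2 set" for I where
  zero: "(\<lambda>_. 0) \<in> tensor_ideal I"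
| left: "p \<in> I \<Longrightarrow> fsupp q \<Longrightarrow> fa_tensor p q \<in> tensor_ideal I"
| right: "fsupp p \<Longrightarrow> q \<in> I \<Longrightarrow> fa_tensor p q \<in> tensor_ideal I"
| add: "P \<in> tensor_ideal I \<Longrightarrow> Q \<in> tensor_ideal I \<Longrightarrow> fa_add P Q \<in> tensor_ideal I"

text \<open>Equality in O_nc(B+) (x) O_nc(B+) of two representatives.\<close>
definition HHeq :: "'k::field fa2 \<Rightarrow> 'k fa2 \<Rightarrow> bool" where
  "HHeq P Q \<longleftrightarrow> fa_sub P Q \<in> tensor_ideal Bideal"

definition fa2_mult :: "'k::field fa2 \<Rightarrow> 'k fa2 \<Rightarrow> 'k fa2" where
  "fa2_mult P Q = (\<lambda>(u, v). \<Sum>i\<le>length u. \<Sum>j\<le>length v.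
      P (take i u, take j v) * Q (drop i u, drop j v))"

definition fa2_one :: "'k::field fa2" where
  "fa2_one = fa_tensor fa_one fa_one"

fun delta_gen :: "gen \<Rightarrow> 'k::field fa2" where
  "delta_gen GA = fa_add (fa_tensor (fa_word [GA]) (fa_word [GA])) (fa_tensor (fa_word [GB]) (fa_word [GC]))"
| "delta_gen GB = fa_add (fa_tensor (fa_word [GA]) (fa_word [GB])) (fa_tensor (fa_word [GB]) (fa_word [GD]))"
| "delta_gen GC = fa_add (fa_tensor (fa_word [GC]) (fa_word [GA])) (fa_tensor (fa_word [GD]) (fa_word [GC]))"
| "delta_gen GD = fa_add (fa_tensor (fa_word [GC]) (fa_word [GB])) (fa_tensor (fa_word [GD]) (fa_word [GD]))"
| "delta_gen GDel = fa_tensor (fa_word [GDel]) (fa_word [GDel])"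
| "delta_gen GDelInv = fa_tensor (fa_word [GDelInv]) (fa_word [GDelInv])"

definition delta_word :: "gen list \<Rightarrow> 'k::field fa2" where
  "delta_word w = foldr (\<lambda>x P. fa2_mult (delta_gen x) P) w fa2_one"

text \<open>Comultiplication, extended as an algebra map (applied to finitely supported elements).\<close>
definition fa_Delta :: "'k::field fa \<Rightarrow> 'k fa2" where
  "fa_Delta f = (\<lambda>uv. \<Sum>w\<in>{w. f w \<noteq> 0}. f w * delta_word w uv)"

fun eps_gen :: "gen \<Rightarrow> 'k::field" where
  "eps_gen GA = 1" | "eps_gen GB = 0" | "eps_gen GC = 0" | "eps_gen GD = 1"
| "eps_gen GDel = 1" | "eps_gen GDelInv = 1"

definition fa_eps :: "'k::field fa \<Rightarrow> 'k" where
  "fa_eps f = (\<Sum>w\<in>{w. f w \<noteq> 0}. f w * prod_list (map eps_gen w))"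

text \<open>A left O_nc(B+)-comodule structure on the finite-dimensional space W = k^'n,
  given in coordinates: rho(e_j) = sum_i X j i (x) e_i.\<close>
definition is_left_comodule :: "('n::finite \<Rightarrow> 'n \<Rightarrow> 'k::field fa) \<Rightarrow> bool" where
  "is_left_comodule X \<longleftrightarrow>
     (\<forall>j i. fsupp (X j i)) \<and>
     (\<forall>j i. HHeq (fa_Delta (X j i)) (\<lambda>uv. \<Sum>k\<in>UNIV. fa_tensor (X j k) (X k i) uv)) \<and>
     (\<forall>j i. fa_eps (X j i) = (if j = i then 1 else 0))"

definition grouplike :: "'k::field fa \<Rightarrow> bool" where
  "grouplike g \<longleftrightarrow> fsupp g \<and> HHeq (fa_Delta g) (fa_tensor g g) \<and> fa_eps g = 1"

text \<open>Coaction of w = sum_j w_j e_j is w \<mapsto> g (x) w.\<close>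
definition semi_invariant_with :: "('n::finite \<Rightarrow> 'n \<Rightarrow> 'k::field fa) \<Rightarrow> ('n \<Rightarrow> 'k) \<Rightarrow> 'k fa \<Rightarrow> bool" where
  "semi_invariant_with X w g \<longleftrightarrow> w \<noteq> (\<lambda>_. 0) \<and> grouplike g \<and>
     (\<forall>i. Heq (\<lambda>u. \<Sum>j\<in>UNIV. w j * X j i u) (\<lambda>u. w i * g u))"

text \<open>Words for a^p and d^q (p, q integers); in O_nc(B+) the inverse of a is
  delta^-1 d and the inverse of d is delta^-1 a.\<close>
definition a_pow_word :: "int \<Rightarrow> gen list" where
  "a_pow_word p = (if p \<ge> 0 then replicate (nat p) GA else concat (replicate (nat (- p)) [GDelInv, GD]))"

definition d_pow_word :: "int \<Rightarrow> gen list" where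
  "d_pow_word q = (if q \<ge> 0 then replicate (nat q) GD else concat (replicate (nat (- q)) [GDelInv, GA]))"

definition alg_closed_field :: "'k::field itself \<Rightarrow> bool" where
  "alg_closed_field _ \<longleftrightarrow> (\<forall>p :: 'k poly. degree p > 0 \<longrightarrow> (\<exists>x. poly p x = 0))"

end

theory Submission
  imports Defs "HOL-Library.Function_Algebras" "HOL-Library.Product_Plus"
begin

text \<open>Grade the free algebra by \<open>(b-degree, a-degree, d-degree)\<close>, where the \<open>b\<close>-degree counts
  \<open>b\<close> minus \<open>c\<close>. The defining relations are homogeneous, so the ideal is graded, and every word
  containing \<open>c\<close> lies in it. Among the \<open>c\<close>-free homogeneous components of the matrix coefficients
  \<open>X j i\<close> that are nonzero in \<open>O_nc(B+)\<close>, pick one of degree \<open>(n, p, q)\<close> with \<open>n\<close> maximal,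
  and a functional \<open>\<phi>\<close> that vanishes on the ideal, is nonzero on this component, and is supported on
  \<open>c\<close>-free words of degree \<open>(n, p, q)\<close>. For a \<open>c\<close>-free word \<open>w\<close> of \<open>b\<close>-degree at most \<open>n\<close>, all terms
  of \<open>\<Delta>(w)\<close> except \<open>w \<otimes> w[b:=d]\<close> have a left factor of smaller \<open>b\<close>-degree, so
  \<open>(\<phi> \<otimes> id) \<Delta>(w) = \<phi>(w) w[b:=d]\<close>, and \<open>w[b:=d] = a\<^sup>p d\<^sup>q\<close> in \<open>O_nc(B+)\<close> whenever \<open>\<phi>(w) \<noteq> 0\<close>.
  Applying \<open>\<phi> \<otimes> id\<close> to \<open>\<Delta>(X j\<^sub>0 i) = \<Sum>k. X j\<^sub>0 k \<otimes> X k i\<close> (the components of higher \<open>b\<close>-degree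
  lie in the ideal) shows that \<open>k \<mapsto> \<phi>(X j\<^sub>0 k)\<close> is a semi-invariant with grouplike \<open>a\<^sup>p d\<^sup>q\<close>.\<close>

lemma sum_fun_apply: "(sum F A) x = (\<Sum>a\<in>A. F a x)"
  by (induction A rule: infinite_finite_induct) auto

definition conv :: "('a \<Rightarrow> 'a \<Rightarrow> 'a) \<Rightarrow> ('a \<Rightarrow> 'k::comm_semiring_1) \<Rightarrow> ('a \<Rightarrow> 'k) \<Rightarrow> 'a \<Rightarrow> 'k" where
  "conv op F G z = (\<Sum>(x,y)\<in>{(x,y). op x y = z}. F x * G y)"

lemma conv_assoc:
  assumes assoc: "\<And>x y w. op (op x y) w = op x (op y w)"
    and fin: "\<And>z. finite {(x,y). op x y = z}"
  shows "conv op (conv op F G) H z = conv op F (conv op G H) z"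
proof -
  let ?D = "\<lambda>z. {(x,y). op x y = z}"
  let ?T = "{(x,y,w). op (op x y) w = z}"
  have "conv op (conv op F G) H z = (\<Sum>q\<in>?D z. \<Sum>r\<in>?D (fst q). F (fst r) * G (snd r) * H (snd q))"
    unfolding conv_def by (auto simp: sum_distrib_right split_beta intro!: sum.cong)
  also have "\<dots> = (\<Sum>p\<in>Sigma (?D z) (\<lambda>q. ?D (fst q)). F (fst (snd p)) * G (snd (snd p)) * H (snd (fst p)))"
    by (subst sum.Sigma) (auto simp: fin split_beta)
  also have "\<dots> = (\<Sum>t\<in>?T. F (fst t) * G (fst (snd t)) * H (snd (snd t)))"
    by (rule sum.reindex_bij_witness[where i="\<lambda>(x,y,w). ((op x y, w), (x,y))" and j="\<lambda>((s,w),(x,y)). (x,y,w)"]) auto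
  also have "\<dots> = (\<Sum>p\<in>Sigma (?D z) (\<lambda>q. ?D (snd q)). F (fst (fst p)) * (G (fst (snd p)) * H (snd (snd p))))"
    by (rule sum.reindex_bij_witness[where j="\<lambda>(x,y,w). ((x, op y w), (y,w))" and i="\<lambda>((x,t),(y,w)). (x,y,w)"])
      (auto simp: assoc mult.assoc)
  also have "\<dots> = (\<Sum>q\<in>?D z. \<Sum>r\<in>?D (snd q). F (fst q) * (G (fst r) * H (snd r)))"
    by (subst sum.Sigma) (auto simp: fin split_beta)
  also have "\<dots> = conv op F (conv op G H) z"
    unfolding conv_def by (auto simp: sum_distrib_left split_beta intro!: sum.cong)
  finally show ?thesis .
qed

lemma append_splits_eq_image: "{(x,y). x @ y = w} = (\<lambda>i. (take i w, drop i w)) ` {..length w}"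
proof (intro set_eqI iffI)
  fix p assume "p \<in> {(x,y). x @ y = w}"
  then obtain a b where "p = (a,b)" "a @ b = w" by auto
  thus "p \<in> (\<lambda>i. (take i w, drop i w)) ` {..length w}"
    by (intro image_eqI[where x="length a"]) auto
qed auto

lemma inj_on_take_drop: "inj_on (\<lambda>i. (take i w, drop i w)) {..length w}"
  by (auto simp: inj_on_def) (metis append_take_drop_id length_take min.absorb2)

lemma finite_append_splits: "finite {(x,y). x @ y = w}"
  by (simp add: append_splits_eq_image)

lemma sum_take_drop_eq_sum_splits:
  "(\<Sum>i\<le>length w. F (take i w) (drop i w)) = (\<Sum>(x,y)\<in>{(x,y). x @ y = w}. F x y)"
  by (simp add: append_splits_eq_image sum.reindex[OF inj_on_take_drop])

lemma fa_mult_conv: "fa_mult f g = conv (@) f g"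
  by (simp add: fun_eq_iff fa_mult_def conv_def sum_take_drop_eq_sum_splits[where F="\<lambda>x y. f x * g y"])

lemma fa_mult_assoc: "fa_mult (fa_mult f g) h = fa_mult f (fa_mult g h)"
  unfolding fa_mult_conv by (rule ext, rule conv_assoc) (auto simp: finite_append_splits)

definition append2 :: "gen list \<times> gen list \<Rightarrow> gen list \<times> gen list \<Rightarrow> gen list \<times> gen list" where
  "append2 x y = (fst x @ fst y, snd x @ snd y)"

lemma finite_append2_splits: "finite {(x,y). append2 x y = z}"
proof -
  have "{(x,y). append2 x y = z} \<subseteq> (\<lambda>((a,b),(c,d)). ((a,c),(b,d))) `
      ({(x,y). x @ y = fst z} \<times> {(x,y). x @ y = snd z})"
    by (auto simp: append2_def image_iff)
  thus ?thesis by (rule finite_subset) (auto intro: finite_append_splits)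
qed

lemma fa2_mult_conv: "fa2_mult P Q = conv append2 P Q"
proof
  fix z :: "gen list \<times> gen list"
  obtain u v where z: "z = (u,v)" by (cases z)
  let ?U = "{(x,y). x @ y = u}" and ?V = "{(x,y). x @ y = v}"
  have "fa2_mult P Q (u,v) = (\<Sum>a\<in>?U. \<Sum>b\<in>?V. P (fst a, fst b) * Q (snd a, snd b))"
    unfolding fa2_mult_def
    by (simp add: sum_take_drop_eq_sum_splits[where F="\<lambda>x y. P (_, x) * Q (_, y)"]
        sum_take_drop_eq_sum_splits[where F="\<lambda>x y. \<Sum>b\<in>?V. P (x, fst b) * Q (y, snd b)"] split_beta)
  also have "\<dots> = (\<Sum>p\<in>?U \<times> ?V. P (fst (fst p), fst (snd p)) * Q (snd (fst p), snd (snd p)))"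
    by (simp add: sum.cartesian_product split_beta)
  also have "\<dots> = conv append2 P Q (u,v)"
    unfolding conv_def
    by (rule sum.reindex_bij_witness[where j="\<lambda>((a,b),(c,d)). ((a,c),(b,d))" and i="\<lambda>((a,c),(b,d)). ((a,b),(c,d))"])
      (auto simp: append2_def)
  finally show "fa2_mult P Q z = conv append2 P Q z" using z by simp
qed

lemma fa2_mult_assoc: "fa2_mult (fa2_mult P Q) R = fa2_mult P (fa2_mult Q R)"
  unfolding fa2_mult_conv by (rule ext, rule conv_assoc[OF _ finite_append2_splits]) (simp add: append2_def)

definition fscale :: "'k::field \<Rightarrow> ('a \<Rightarrow> 'k) \<Rightarrow> ('a \<Rightarrow> 'k)" where
  "fscale c f = (\<lambda>w. c * f w)"

definition supp :: "('a \<Rightarrow> 'k::zero) \<Rightarrow> 'a set" where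
  "supp f = {x. f x \<noteq> 0}"

lemma fa_add_eq: "fa_add f g = f + g" by (simp add: fa_add_def fun_eq_iff)
lemma fa_sub_eq: "fa_sub f g = f - g" by (simp add: fa_sub_def fun_eq_iff)
lemma zero_fun_eq: "(\<lambda>_. 0::'k::zero) = 0" by (simp add: zero_fun_def)

lemma fsupp_iff_finite_supp: "fsupp f \<longleftrightarrow> finite (supp f)" by (simp add: fsupp_def supp_def)

lemma fsupp_zero [simp]: "fsupp (0::'a \<Rightarrow> 'k::zero)" by (simp add: fsupp_def)

lemma fsupp_add [simp]: "fsupp f \<Longrightarrow> fsupp g \<Longrightarrow> fsupp (f + (g::'a \<Rightarrow> 'k::field))"
  unfolding fsupp_def by (rule finite_subset[of _ "{x. f x \<noteq> 0} \<union> {x. g x \<noteq> 0}"]) auto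
lemma fsupp_diff [simp]: "fsupp f \<Longrightarrow> fsupp g \<Longrightarrow> fsupp (f - (g::'a \<Rightarrow> 'k::field))"
  unfolding fsupp_def by (rule finite_subset[of _ "{x. f x \<noteq> 0} \<union> {x. g x \<noteq> 0}"]) auto
lemma fsupp_fscale [simp]: "fsupp f \<Longrightarrow> fsupp (fscale c f)"
  unfolding fsupp_def fscale_def by (rule finite_subset[of _ "{x. f x \<noteq> 0}"]) auto
lemma fsupp_sum [simp]: "(\<And>i. i \<in> A \<Longrightarrow> fsupp (F i)) \<Longrightarrow> fsupp (sum F A :: 'a \<Rightarrow> 'k::field)"
  by (induction A rule: infinite_finite_induct) auto
lemma fsupp_word [simp]: "fsupp (fa_word u)"
  unfolding fsupp_def fa_word_def by (rule finite_subset[of _ "{u}"]) auto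

lemma fscale_apply [simp]: "fscale c f x = c * f x" by (simp add: fscale_def)
lemma fscale_zero [simp]: "fscale 0 f = 0" "fscale c 0 = 0" by (auto simp: fscale_def fun_eq_iff)
lemma fscale_fscale [simp]: "fscale c (fscale d f) = fscale (c * d) f" by (simp add: fscale_def fun_eq_iff)
lemma fscale_add: "fscale c (f + g) = fscale c f + fscale c g" by (simp add: fscale_def fun_eq_iff algebra_simps)
lemma fscale_diff: "fscale c (f - g) = fscale c f - fscale c g" by (simp add: fscale_def fun_eq_iff algebra_simps)
lemma fscale_sum: "fscale c (sum F A) = (\<Sum>i\<in>A. fscale c (F i))"
  by (simp add: fscale_def fun_eq_iff sum_fun_apply sum_distrib_left)
lemma sum_fscale: "fscale (sum F A) f = (\<Sum>i\<in>A. fscale (F i) f)"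
  by (simp add: fscale_def fun_eq_iff sum_fun_apply sum_distrib_right)
lemma fscale_minus_one: "fscale (- 1) f = - f" by (simp add: fun_eq_iff)

lemma fa_expand_words:
  assumes "finite S" "supp f \<subseteq> S"
  shows "f = (\<Sum>u\<in>S. fscale (f u) (fa_word u))"
proof
  fix w
  have "(\<Sum>u\<in>S. fscale (f u) (fa_word u)) w = (\<Sum>u\<in>S. if u = w then f u else 0)"
    by (auto simp: sum_fun_apply fa_word_def intro!: sum.cong)
  also have "\<dots> = f w" using assms by (auto simp: supp_def)
  finally show "f w = (\<Sum>u\<in>S. fscale (f u) (fa_word u)) w" by simp
qed

lemma fa_expand_words_supp: "fsupp f \<Longrightarrow> f = (\<Sum>u\<in>supp f. fscale (f u) (fa_word u))"
  by (rule fa_expand_words) (auto simp: fsupp_iff_finite_supp)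

lemma conv_add_left: "conv op (F + G) H = conv op F H + conv op G H"
  by (auto simp: conv_def fun_eq_iff algebra_simps sum.distrib split_beta)
lemma conv_add_right: "conv op H (F + G) = conv op H F + conv op H G"
  by (auto simp: conv_def fun_eq_iff algebra_simps sum.distrib split_beta)
lemma conv_diff_left: "conv op (F - G) (H::_ \<Rightarrow> 'k::field) = conv op F H - conv op G H"
  by (auto simp: conv_def fun_eq_iff algebra_simps sum_subtractf split_beta)
lemma conv_diff_right: "conv op (H::_ \<Rightarrow> 'k::field) (F - G) = conv op H F - conv op H G"
  by (auto simp: conv_def fun_eq_iff algebra_simps sum_subtractf split_beta)
lemma conv_fscale_left: "conv op (fscale c F) (H::_ \<Rightarrow> 'k::field) = fscale c (conv op F H)"
  by (auto simp: conv_def fun_eq_iff algebra_simps sum_distrib_left split_beta)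
lemma conv_fscale_right: "conv op H (fscale c F :: _ \<Rightarrow> 'k::field) = fscale c (conv op H F)"
  by (auto simp: conv_def fun_eq_iff algebra_simps sum_distrib_left split_beta)
lemma conv_zero [simp]: "conv op 0 H = 0" "conv op H 0 = 0" by (auto simp: conv_def fun_eq_iff)
lemma conv_sum_left: "conv op (sum F A) H = (\<Sum>i\<in>A. conv op (F i) H)"
proof (induction A rule: infinite_finite_induct)
  case (insert x A) then show ?case by (simp only: sum.insert[OF insert(1,2)] conv_add_left)
qed (auto simp: conv_def fun_eq_iff)
lemma conv_sum_right: "conv op H (sum F A) = (\<Sum>i\<in>A. conv op H (F i))"
proof (induction A rule: infinite_finite_induct)
  case (insert x A) then show ?case by (simp only: sum.insert[OF insert(1,2)] conv_add_right)
qed (auto simp: conv_def fun_eq_iff)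

lemmas conv_bilinear = conv_add_left conv_add_right conv_diff_left conv_diff_right
  conv_fscale_left conv_fscale_right conv_sum_left conv_sum_right

lemma fa_mult_word: "fa_mult (fa_word u) (fa_word v) = fa_word (u @ v)"
proof
  fix w
  have "conv (@) (fa_word u) (fa_word v) w = (\<Sum>p\<in>{(x,y). x @ y = w}. if p = (u,v) then 1 else 0)"
    unfolding conv_def by (intro sum.cong) (auto simp: fa_word_def split_beta)
  also have "\<dots> = fa_word (u @ v) w"
    by (simp add: finite_append_splits fa_word_def)
  finally show "fa_mult (fa_word u) (fa_word v) w = fa_word (u @ v) w"
    by (simp add: fa_mult_conv)
qed

lemma fa_mult_expand:
  assumes "fsupp f" "fsupp g"
  shows "fa_mult f g = (\<Sum>p\<in>supp f. \<Sum>q\<in>supp g. fscale (f p * g q) (fa_word (p @ q)))"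
proof -
  have "fa_mult f g = fa_mult (\<Sum>u\<in>supp f. fscale (f u) (fa_word u)) (\<Sum>u\<in>supp g. fscale (g u) (fa_word u))"
    using fa_expand_words_supp[OF assms(1)] fa_expand_words_supp[OF assms(2)] by simp
  also have "\<dots> = (\<Sum>p\<in>supp f. \<Sum>q\<in>supp g. fscale (f p * g q) (fa_word (p @ q)))"
    by (simp add: fa_mult_conv conv_bilinear fa_mult_word[unfolded fa_mult_conv] fscale_sum)
      (subst sum.swap, simp add: mult.commute)
  finally show ?thesis .
qed

lemma fsupp_fa_mult [simp]: "fsupp f \<Longrightarrow> fsupp g \<Longrightarrow> fsupp (fa_mult f g)"
  by (subst fa_mult_expand) auto

lemma fa_mult_one_left [simp]: "fa_mult fa_one f = f"
  by (simp add: fa_mult_def fa_word_def fun_eq_iff sum.atMost_shift)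

lemma fa_mult_one_right [simp]: "fa_mult f fa_one = f"
proof
  fix w
  have "fa_mult f fa_one w = (\<Sum>i\<le>length w. if i = length w then f w else 0)"
    unfolding fa_mult_def by (intro sum.cong) (auto simp: fa_word_def)
  thus "fa_mult f fa_one w = f w" by simp
qed

lemma fa_mult_add_left: "fa_mult (f + g) h = fa_mult f h + fa_mult g h"
  by (simp add: fa_mult_conv conv_add_left)
lemma fa_mult_add_right: "fa_mult h (f + g) = fa_mult h f + fa_mult h g"
  by (simp add: fa_mult_conv conv_add_right)
lemma fa_mult_diff_left: "fa_mult (f - g) h = fa_mult f h - fa_mult g h"
  by (simp add: fa_mult_conv conv_diff_left)
lemma fa_mult_diff_right: "fa_mult h (f - g) = fa_mult h f - fa_mult h g"
  by (simp add: fa_mult_conv conv_diff_right)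
lemma fa_mult_fscale_left: "fa_mult (fscale c f) g = fscale c (fa_mult f g)"
  by (simp add: fa_mult_conv conv_fscale_left)

definition lin_ext :: "(gen list \<Rightarrow> 'k::field) \<Rightarrow> 'k fa \<Rightarrow> 'k" where
  "lin_ext L f = (\<Sum>w\<in>supp f. f w * L w)"

lemma lin_ext_superset: "finite S \<Longrightarrow> supp f \<subseteq> S \<Longrightarrow> lin_ext L f = (\<Sum>w\<in>S. f w * L w)"
  unfolding lin_ext_def by (rule sum.mono_neutral_left) (auto simp: supp_def)

lemma lin_ext_add: "fsupp f \<Longrightarrow> fsupp g \<Longrightarrow> lin_ext L (f + g) = lin_ext L f + lin_ext L g"
  by (subst (1 2 3) lin_ext_superset[where S="supp f \<union> supp g"])
    (auto simp: fsupp_iff_finite_supp supp_def algebra_simps sum.distrib)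
lemma lin_ext_diff: "fsupp f \<Longrightarrow> fsupp g \<Longrightarrow> lin_ext L (f - g) = lin_ext L f - lin_ext L g"
  by (subst (1 2 3) lin_ext_superset[where S="supp f \<union> supp g"])
    (auto simp: fsupp_iff_finite_supp supp_def algebra_simps sum_subtractf)
lemma lin_ext_fscale: "fsupp f \<Longrightarrow> lin_ext L (fscale c f) = c * lin_ext L f"
  by (subst (1 2) lin_ext_superset[where S="supp f"])
    (auto simp: fsupp_iff_finite_supp supp_def algebra_simps sum_distrib_left)
lemma lin_ext_sum: "(\<And>i. i \<in> A \<Longrightarrow> fsupp (F i)) \<Longrightarrow> lin_ext L (sum F A) = (\<Sum>i\<in>A. lin_ext L (F i))"
proof (induction A rule: infinite_finite_induct)
  case (insert x A)
  then have "fsupp (F x)" "fsupp (sum F A)" by auto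
  then show ?case using insert by (simp only: sum.insert[OF insert(1,2)] lin_ext_add) simp
qed (auto simp: lin_ext_def supp_def)
lemma lin_ext_word [simp]: "lin_ext L (fa_word u) = L u"
  by (subst lin_ext_superset[where S="{u}"]) (auto simp: supp_def fa_word_def)

lemma lin_ext_fa_mult:
  assumes "fsupp f" "fsupp g" "\<And>p q. L (p @ q) = L p * L q"
  shows "lin_ext L (fa_mult f g) = lin_ext L f * lin_ext L g"
proof -
  have "lin_ext L (fa_mult f g) = (\<Sum>p\<in>supp f. \<Sum>q\<in>supp g. f p * g q * L (p @ q))"
    by (subst fa_mult_expand[OF assms(1,2)]) (simp add: lin_ext_sum lin_ext_fscale)
  also have "\<dots> = lin_ext L f * lin_ext L g"
    by (simp add: lin_ext_def sum_product assms(3) algebra_simps)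
  finally show ?thesis .
qed

subsection \<open>The ideal of relations\<close>

lemma fsupp_rel: "r \<in> bplus_rels \<Longrightarrow> fsupp r"
  unfolding bplus_rels_def by (auto simp: fa_sub_eq)

lemma fsupp_fa_add: "fsupp f \<Longrightarrow> fsupp g \<Longrightarrow> fsupp (fa_add f g)"
  by (simp add: fa_add_eq)

lemma Bideal_fsupp: "f \<in> Bideal \<Longrightarrow> fsupp f"
  unfolding Bideal_def
  by (induction rule: ideal_gen.induct) (auto simp: fsupp_rel zero_fun_eq intro: fsupp_fa_add)

lemma Bideal_zero [simp]: "0 \<in> Bideal"
  using ideal_gen.zero by (simp add: Bideal_def zero_fun_eq)

lemma Bideal_add [simp]: "f \<in> Bideal \<Longrightarrow> g \<in> Bideal \<Longrightarrow> f + g \<in> Bideal"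
  unfolding Bideal_def using ideal_gen.add by (metis fa_add_eq)

lemma Bideal_gen: "r \<in> bplus_rels \<Longrightarrow> fsupp x \<Longrightarrow> fsupp y \<Longrightarrow> fa_mult (fa_mult x r) y \<in> Bideal"
  unfolding Bideal_def by (rule ideal_gen.gen)

lemma Bideal_fscale [simp]: "f \<in> Bideal \<Longrightarrow> fscale c f \<in> Bideal"
  unfolding Bideal_def
proof (induction f rule: ideal_gen.induct)
  case (gen r x y)
  then show ?case by (simp add: fa_mult_fscale_left[symmetric] ideal_gen.gen)
next
  case (add f g) then show ?case unfolding fa_add_eq fscale_add by (intro ideal_gen.add[unfolded fa_add_eq])
qed (simp add: zero_fun_eq ideal_gen.zero[unfolded zero_fun_eq])

lemma Bideal_uminus [simp]: "f \<in> Bideal \<Longrightarrow> - f \<in> Bideal"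
  using Bideal_fscale[of f "- 1"] by (simp add: fscale_minus_one)

lemma Bideal_diff [simp]: "f \<in> Bideal \<Longrightarrow> g \<in> Bideal \<Longrightarrow> f - g \<in> Bideal"
  by (metis Bideal_add Bideal_uminus diff_conv_add_uminus)

lemma Bideal_sum: "(\<And>i. i \<in> A \<Longrightarrow> F i \<in> Bideal) \<Longrightarrow> sum F A \<in> Bideal"
  by (induction A rule: infinite_finite_induct) auto

lemma Bideal_mult_left: "f \<in> Bideal \<Longrightarrow> fsupp z \<Longrightarrow> fa_mult z f \<in> Bideal"
  unfolding Bideal_def
proof (induction f rule: ideal_gen.induct)
  case (gen r x y)
  then show ?case using Bideal_gen[of r "fa_mult z x" y] by (simp add: fa_mult_assoc Bideal_def)
next
  case (add f g) then show ?case unfolding fa_add_eq fa_mult_add_right by (intro ideal_gen.add[unfolded fa_add_eq])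
qed (simp add: zero_fun_eq fa_mult_conv ideal_gen.zero[unfolded zero_fun_eq])

lemma Bideal_mult_right: "f \<in> Bideal \<Longrightarrow> fsupp z \<Longrightarrow> fa_mult f z \<in> Bideal"
  unfolding Bideal_def
proof (induction f rule: ideal_gen.induct)
  case (gen r x y)
  then show ?case using Bideal_gen[of r x "fa_mult y z"] by (simp add: fa_mult_assoc Bideal_def)
next
  case (add f g) then show ?case unfolding fa_add_eq fa_mult_add_left by (intro ideal_gen.add[unfolded fa_add_eq])
qed (simp add: zero_fun_eq fa_mult_conv ideal_gen.zero[unfolded zero_fun_eq])

lemma Bideal_rel: "r \<in> bplus_rels \<Longrightarrow> r \<in> Bideal"
  using Bideal_gen[of r fa_one fa_one] by (simp add: fsupp_rel)

lemma word_with_c_in_Bideal: "GC \<in> set w \<Longrightarrow> fa_word w \<in> Bideal"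
proof -
  assume "GC \<in> set w"
  then obtain p q where w: "w = p @ GC # q" by (meson split_list)
  have "fa_word w = fa_mult (fa_mult (fa_word p) (fa_word [GC])) (fa_word q)"
    by (simp add: w fa_mult_word)
  also have "\<dots> \<in> Bideal" by (rule Bideal_gen) (auto simp: bplus_rels_def)
  finally show ?thesis .
qed

lemma Heq_iff: "Heq f g \<longleftrightarrow> f - g \<in> Bideal"
  by (simp add: Heq_def fa_sub_eq)

lemma Heq_refl [simp]: "Heq f f"
  by (simp add: Heq_iff)

lemma Heq_sym: "Heq f g \<Longrightarrow> Heq g f"
  unfolding Heq_iff by (drule Bideal_uminus) simp

lemma Heq_trans [trans]: "Heq f g \<Longrightarrow> Heq g h \<Longrightarrow> Heq f h"
  unfolding Heq_iff by (drule (1) Bideal_add) simp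

lemma Heq_fscale: "Heq f g \<Longrightarrow> Heq (fscale c f) (fscale c g)"
  unfolding Heq_iff by (drule Bideal_fscale[of _ c]) (simp add: fscale_diff)

lemma Heq_sum: "(\<And>i. i \<in> A \<Longrightarrow> Heq (F i) (G i)) \<Longrightarrow> Heq (sum F A) (sum G A)"
  unfolding Heq_iff by (drule Bideal_sum) (simp add: sum_subtractf)

lemma Heq_mult:
  assumes "Heq f f'" "Heq g g'" "fsupp f'" "fsupp g"
  shows "Heq (fa_mult f g) (fa_mult f' g')"
proof -
  have "fa_mult (f - f') g + fa_mult f' (g - g') \<in> Bideal"
    using assms unfolding Heq_iff by (intro Bideal_add Bideal_mult_left Bideal_mult_right)
  then show ?thesis by (simp add: Heq_iff fa_mult_diff_left fa_mult_diff_right)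
qed

lemma Heq_word_append:
  assumes "Heq (fa_word u) (fa_word u' :: 'k::field fa)" "Heq (fa_word v) (fa_word v' :: 'k fa)"
  shows "Heq (fa_word (u @ v)) (fa_word (u' @ v') :: 'k fa)"
  using Heq_mult[OF assms] by (simp add: fa_mult_word)
lemma Heq_word_cong:
  "Heq (fa_word u) (fa_word v :: 'k::field fa) \<Longrightarrow> Heq (fa_word (l @ u @ r)) (fa_word (l @ v @ r) :: 'k fa)"
  by (intro Heq_word_append Heq_refl)

lemma Heq_rel: "fa_sub f g \<in> bplus_rels \<Longrightarrow> Heq f g"
  by (simp add: Heq_def Bideal_rel)

lemma Heq_rel_mod_c:
  assumes "fa_sub (fa_sub (fa_word u) (fa_word w)) (fa_word v) \<in> (bplus_rels :: 'k::field fa set)"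
    and "GC \<in> set w"
  shows "Heq (fa_word u) (fa_word v :: 'k fa)"
proof -
  have "(fa_word u - fa_word w - fa_word v) + fa_word w \<in> (Bideal :: 'k fa set)"
    by (rule Bideal_add[OF Bideal_rel[OF assms(1), unfolded fa_sub_eq] word_with_c_in_Bideal[OF assms(2)]])
  then show ?thesis by (simp add: Heq_iff algebra_simps)
qed

lemma rel_ad: "Heq (fa_word [GA,GD]) (fa_word [GDel])"
  by (rule Heq_rel_mod_c[of _ "[GC,GB]"]) (auto simp: bplus_rels_def)
lemma rel_da: "Heq (fa_word [GD,GA]) (fa_word [GDel])"
  by (rule Heq_rel_mod_c[of _ "[GB,GC]"]) (auto simp: bplus_rels_def)
lemma rel_a_dinv_d: "Heq (fa_word [GA,GDelInv,GD]) fa_one"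
  by (rule Heq_rel_mod_c[of _ "[GB,GDelInv,GC]"]) (auto simp: bplus_rels_def)
lemma rel_d_dinv_a: "Heq (fa_word [GD,GDelInv,GA]) fa_one"
  by (rule Heq_rel_mod_c[of _ "[GC,GDelInv,GB]"]) (auto simp: bplus_rels_def)
lemma rel_delta_dinv: "Heq (fa_word [GDel,GDelInv]) fa_one"
  by (rule Heq_rel) (simp add: bplus_rels_def)
lemma rel_dinv_delta: "Heq (fa_word [GDelInv,GDel]) fa_one"
  by (rule Heq_rel) (simp add: bplus_rels_def)
lemma rel_bd: "Heq (fa_word [GB,GD]) (fa_word [GD,GB])"
  by (rule Heq_rel) (simp add: bplus_rels_def)
lemma rel_b_dinv_a: "Heq (fa_word [GB,GDelInv,GA]) (fa_word [GA,GDelInv,GB])"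
  by (rule Heq_rel) (simp add: bplus_rels_def)

lemma Heq_ad_da: "Heq (fa_word [GA,GD]) (fa_word [GD,GA])"
  by (rule Heq_trans[OF rel_ad Heq_sym[OF rel_da]])

lemma Heq_delta_a_commute: "Heq (fa_word [GDel,GA]) (fa_word [GA,GDel])"
  using Heq_word_cong[OF Heq_sym[OF rel_ad], of "[]" "[GA]"] Heq_word_cong[OF rel_da, of "[GA]" "[]"]
  by (auto intro: Heq_trans)

lemma Heq_delta_d_commute: "Heq (fa_word [GDel,GD]) (fa_word [GD,GDel])"
  using Heq_word_cong[OF Heq_sym[OF rel_da], of "[]" "[GD]"] Heq_word_cong[OF rel_ad, of "[GD]" "[]"]
  by (auto intro: Heq_trans)

lemma Heq_dinv_commute:
  assumes "Heq (fa_word [GDel,x]) (fa_word [x,GDel] :: 'k::field fa)"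
  shows "Heq (fa_word [GDelInv,x]) (fa_word [x,GDelInv] :: 'k fa)"
proof -
  have "Heq (fa_word [GDelInv,x]) (fa_word ([GDelInv,x] @ [GDel,GDelInv]) :: 'k fa)"
    using Heq_word_cong[OF Heq_sym[OF rel_delta_dinv], of "[GDelInv,x]" "[]"] by simp
  also have "Heq \<dots> (fa_word ([GDelInv] @ [GDel,x] @ [GDelInv]))"
    using Heq_word_cong[OF Heq_sym[OF assms], of "[GDelInv]" "[GDelInv]"] by simp
  also have "Heq \<dots> (fa_word [x,GDelInv])"
    using Heq_word_cong[OF rel_dinv_delta, of "[]" "[x,GDelInv]"] by simp
  finally show ?thesis .
qed

subsection \<open>Normal form of grouplike words\<close>

abbreviation a_inv_word :: "gen list" where "a_inv_word \<equiv> [GDelInv, GD]"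
abbreviation d_inv_word :: "gen list" where "d_inv_word \<equiv> [GDelInv, GA]"

lemma Heq_a_inv_a: "Heq (fa_word (a_inv_word @ [GA])) fa_one"
proof -
  have "Heq (fa_word (a_inv_word @ [GA])) (fa_word [GDelInv,GDel])"
    using Heq_word_cong[OF rel_da, of "[GDelInv]" "[]"] by simp
  also have "Heq \<dots> fa_one" by (rule rel_dinv_delta)
  finally show ?thesis .
qed

lemma Heq_d_inv_d: "Heq (fa_word (d_inv_word @ [GD])) fa_one"
proof -
  have "Heq (fa_word (d_inv_word @ [GD])) (fa_word [GDelInv,GDel])"
    using Heq_word_cong[OF rel_ad, of "[GDelInv]" "[]"] by simp
  also have "Heq \<dots> fa_one" by (rule rel_dinv_delta)
  finally show ?thesis .
qed

lemma Heq_d_a_commute: "Heq (fa_word ([GD] @ [GA])) (fa_word ([GA] @ [GD]))"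
  using Heq_sym[OF Heq_ad_da] by simp

lemma Heq_d_a_inv_commute: "Heq (fa_word ([GD] @ a_inv_word)) (fa_word (a_inv_word @ [GD]))"
  using Heq_word_cong[OF Heq_sym[OF Heq_dinv_commute[OF Heq_delta_d_commute]], of "[]" "[GD]"] by simp

lemma Heq_d_inv_a_commute: "Heq (fa_word (d_inv_word @ [GA])) (fa_word ([GA] @ d_inv_word))"
  using Heq_word_cong[OF Heq_dinv_commute[OF Heq_delta_a_commute], of "[]" "[GA]"] by simp

lemma Heq_d_inv_a_inv_commute: "Heq (fa_word (d_inv_word @ a_inv_word)) (fa_word (a_inv_word @ d_inv_word))"
proof -
  have "Heq (fa_word (d_inv_word @ a_inv_word)) (fa_word [GDelInv,GDelInv,GA,GD])"
    using Heq_word_cong[OF Heq_sym[OF Heq_dinv_commute[OF Heq_delta_a_commute]], of "[GDelInv]" "[GD]"] by simp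
  also have "Heq \<dots> (fa_word [GDelInv,GDelInv,GD,GA])"
    using Heq_word_cong[OF Heq_ad_da, of "[GDelInv,GDelInv]" "[]"] by simp
  also have "Heq \<dots> (fa_word (a_inv_word @ d_inv_word))"
    using Heq_word_cong[OF Heq_dinv_commute[OF Heq_delta_d_commute], of "[GDelInv]" "[GA]"] by simp
  finally show ?thesis .
qed

lemma Heq_commute_concat_replicate:
  assumes "Heq (fa_word (e @ x)) (fa_word (x @ e) :: 'k::field fa)"
  shows "Heq (fa_word (e @ concat (replicate n x))) (fa_word (concat (replicate n x) @ e) :: 'k fa)"
proof (induction n)
  case (Suc n)
  have "Heq (fa_word (e @ x @ concat (replicate n x))) (fa_word (x @ e @ concat (replicate n x)) :: 'k fa)"
    using Heq_word_cong[OF assms, of "[]" "concat (replicate n x)"] by simp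
  also have "Heq \<dots> (fa_word (x @ concat (replicate n x) @ e))"
    using Heq_word_cong[OF Suc.IH, of x "[]"] by simp
  finally show ?case by simp
qed simp

lemma replicate_eq_concat_replicate: "replicate n x = concat (replicate n [x])"
  by (induction n) auto

lemma Heq_commute_a_pow_word:
  assumes "Heq (fa_word (e @ [GA])) (fa_word ([GA] @ e) :: 'k::field fa)"
    and "Heq (fa_word (e @ a_inv_word)) (fa_word (a_inv_word @ e) :: 'k fa)"
  shows "Heq (fa_word (e @ a_pow_word p)) (fa_word (a_pow_word p @ e) :: 'k fa)"
  using Heq_commute_concat_replicate[OF assms(1), of "nat p"] Heq_commute_concat_replicate[OF assms(2), of "nat (- p)"]
  by (simp add: a_pow_word_def replicate_eq_concat_replicate[symmetric])

lemma a_pow_word_succ: "p \<ge> 0 \<Longrightarrow> a_pow_word (p + 1) = GA # a_pow_word p"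
  by (simp add: a_pow_word_def nat_add_distrib)
lemma a_pow_word_pred:
  assumes "p \<le> 0"
  shows "a_pow_word (p - 1) = a_inv_word @ a_pow_word p"
proof -
  have "nat (- (p - 1)) = Suc (nat (- p))" using assms by simp
  then show ?thesis using assms by (simp add: a_pow_word_def)
qed
lemma d_pow_word_succ: "q \<ge> 0 \<Longrightarrow> d_pow_word (q + 1) = GD # d_pow_word q"
  by (simp add: d_pow_word_def nat_add_distrib)
lemma d_pow_word_pred:
  assumes "q \<le> 0"
  shows "d_pow_word (q - 1) = d_inv_word @ d_pow_word q"
proof -
  have "nat (- (q - 1)) = Suc (nat (- q))" using assms by simp
  then show ?thesis using assms by (simp add: d_pow_word_def)
qed

lemma Heq_a_a_pow_word: "Heq (fa_word ([GA] @ a_pow_word p)) (fa_word (a_pow_word (p + 1)))"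
proof (cases "p \<ge> 0")
  case False
  then have "a_pow_word p = a_inv_word @ a_pow_word (p + 1)"
    using a_pow_word_pred[of "p + 1"] by simp
  then show ?thesis using Heq_word_cong[OF rel_a_dinv_d, of "[]" "a_pow_word (p + 1)"] by simp
qed (simp add: a_pow_word_succ)

lemma Heq_a_inv_a_pow_word: "Heq (fa_word (a_inv_word @ a_pow_word p)) (fa_word (a_pow_word (p - 1)))"
proof (cases "p \<le> 0")
  case False
  then have "a_pow_word p = [GA] @ a_pow_word (p - 1)"
    using a_pow_word_succ[of "p - 1"] by simp
  then show ?thesis using Heq_word_cong[OF Heq_a_inv_a, of "[]" "a_pow_word (p - 1)"] by simp
qed (simp add: a_pow_word_pred)

lemma Heq_d_d_pow_word: "Heq (fa_word ([GD] @ d_pow_word q)) (fa_word (d_pow_word (q + 1)))"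
proof (cases "q \<ge> 0")
  case False
  then have "d_pow_word q = d_inv_word @ d_pow_word (q + 1)"
    using d_pow_word_pred[of "q + 1"] by simp
  then show ?thesis using Heq_word_cong[OF rel_d_dinv_a, of "[]" "d_pow_word (q + 1)"] by simp
qed (simp add: d_pow_word_succ)

lemma Heq_d_inv_d_pow_word: "Heq (fa_word (d_inv_word @ d_pow_word q)) (fa_word (d_pow_word (q - 1)))"
proof (cases "q \<le> 0")
  case False
  then have "d_pow_word q = [GD] @ d_pow_word (q - 1)"
    using d_pow_word_succ[of "q - 1"] by simp
  then show ?thesis using Heq_word_cong[OF Heq_d_inv_d, of "[]" "d_pow_word (q - 1)"] by simp
qed (simp add: d_pow_word_pred)

lemma Heq_dinv_a_inv_d_inv: "Heq (fa_word [GDelInv]) (fa_word (a_inv_word @ d_inv_word))"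
proof -
  have "Heq (fa_word (a_inv_word @ d_inv_word)) (fa_word [GDelInv,GDelInv,GD,GA])"
    using Heq_word_cong[OF Heq_sym[OF Heq_dinv_commute[OF Heq_delta_d_commute]], of "[GDelInv]" "[GA]"] by simp
  also have "Heq \<dots> (fa_word [GDelInv,GDelInv,GDel])"
    using Heq_word_cong[OF rel_da, of "[GDelInv,GDelInv]" "[]"] by simp
  also have "Heq \<dots> (fa_word [GDelInv])"
    using Heq_word_cong[OF rel_dinv_delta, of "[GDelInv]" "[]"] by simp
  finally show ?thesis by (rule Heq_sym)
qed

lemma Heq_a_normal:
  "Heq (fa_word ([GA] @ a_pow_word p @ d_pow_word q)) (fa_word (a_pow_word (p + 1) @ d_pow_word q))"
  using Heq_word_cong[OF Heq_a_a_pow_word, where l="[]" and r="d_pow_word q"] by simp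

lemma Heq_a_inv_normal:
  "Heq (fa_word (a_inv_word @ a_pow_word p @ d_pow_word q)) (fa_word (a_pow_word (p - 1) @ d_pow_word q))"
  using Heq_word_cong[OF Heq_a_inv_a_pow_word, where l="[]" and r="d_pow_word q"] by simp

lemma Heq_d_normal:
  "Heq (fa_word ([GD] @ a_pow_word p @ d_pow_word q)) (fa_word (a_pow_word p @ d_pow_word (q + 1)))"
proof -
  have "Heq (fa_word ([GD] @ a_pow_word p @ d_pow_word q)) (fa_word (a_pow_word p @ [GD] @ d_pow_word q))"
    using Heq_word_cong[OF Heq_commute_a_pow_word[OF Heq_d_a_commute Heq_d_a_inv_commute], where l="[]" and r="d_pow_word q"]
    by simp
  also have "Heq \<dots> (fa_word (a_pow_word p @ d_pow_word (q + 1)))"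
    using Heq_word_cong[OF Heq_d_d_pow_word, where l="a_pow_word p" and r="[]"] by simp
  finally show ?thesis .
qed

lemma Heq_d_inv_normal:
  "Heq (fa_word (d_inv_word @ a_pow_word p @ d_pow_word q)) (fa_word (a_pow_word p @ d_pow_word (q - 1)))"
proof -
  have "Heq (fa_word (d_inv_word @ a_pow_word p @ d_pow_word q)) (fa_word (a_pow_word p @ d_inv_word @ d_pow_word q))"
    using Heq_word_cong[OF Heq_commute_a_pow_word[OF Heq_d_inv_a_commute Heq_d_inv_a_inv_commute], where l="[]" and r="d_pow_word q"]
    by simp
  also have "Heq \<dots> (fa_word (a_pow_word p @ d_pow_word (q - 1)))"
    using Heq_word_cong[OF Heq_d_inv_d_pow_word, where l="a_pow_word p" and r="[]"] by simp
  finally show ?thesis .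
qed

text \<open>\<open>a_deg_gen\<close> and \<open>d_deg_gen\<close> count the entries in columns 1 and 2 of the matrix
  (\<open>\<delta>\<close> lies in both, \<open>\<delta>\<^sup>-\<^sup>1\<close> counts with sign \<open>-1\<close>); \<open>b_deg_gen\<close> counts row 1 minus column 1.
  All defining relations of \<open>O_nc(B+)\<close> are homogeneous for this grading.\<close>

fun a_deg_gen :: "gen \<Rightarrow> int" where
  "a_deg_gen GA = 1" | "a_deg_gen GB = 0" | "a_deg_gen GC = 1" | "a_deg_gen GD = 0"
| "a_deg_gen GDel = 1" | "a_deg_gen GDelInv = -1"

fun d_deg_gen :: "gen \<Rightarrow> int" where
  "d_deg_gen GA = 0" | "d_deg_gen GB = 1" | "d_deg_gen GC = 0" | "d_deg_gen GD = 1"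
| "d_deg_gen GDel = 1" | "d_deg_gen GDelInv = -1"

fun b_deg_gen :: "gen \<Rightarrow> int" where
  "b_deg_gen GA = 0" | "b_deg_gen GB = 1" | "b_deg_gen GC = -1" | "b_deg_gen GD = 0"
| "b_deg_gen GDel = 0" | "b_deg_gen GDelInv = 0"

definition a_deg :: "gen list \<Rightarrow> int" where "a_deg w = sum_list (map a_deg_gen w)"
definition d_deg :: "gen list \<Rightarrow> int" where "d_deg w = sum_list (map d_deg_gen w)"
definition b_deg :: "gen list \<Rightarrow> int" where "b_deg w = sum_list (map b_deg_gen w)"

definition grouplike_gens :: "gen set" where "grouplike_gens = {GA, GD, GDel, GDelInv}"

lemma grouplike_gens_simps [simp]:
  "GA \<in> grouplike_gens" "GD \<in> grouplike_gens" "GDel \<in> grouplike_gens" "GDelInv \<in> grouplike_gens"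
  "GB \<notin> grouplike_gens" "GC \<notin> grouplike_gens"
  by (auto simp: grouplike_gens_def)

lemma pow_words_grouplike: "set (a_pow_word p @ d_pow_word q) \<subseteq> grouplike_gens"
  by (auto simp: a_pow_word_def d_pow_word_def grouplike_gens_def)

lemma Heq_gen_normal:
  assumes "x \<in> grouplike_gens"
  shows "Heq (fa_word ([x] @ a_pow_word p @ d_pow_word q))
             (fa_word (a_pow_word (p + a_deg_gen x) @ d_pow_word (q + d_deg_gen x)))"
  using assms unfolding grouplike_gens_def
proof (elim insertE emptyE)
  assume x: "x = GDel"
  have "Heq (fa_word ([GDel] @ a_pow_word p @ d_pow_word q)) (fa_word ([GA] @ [GD] @ a_pow_word p @ d_pow_word q))"
    using Heq_word_cong[OF Heq_sym[OF rel_ad], of "[]" "a_pow_word p @ d_pow_word q"] by simp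
  also have "Heq \<dots> (fa_word ([GA] @ a_pow_word p @ d_pow_word (q + 1)))"
    using Heq_word_cong[OF Heq_d_normal, where l="[GA]" and r="[]"] by simp
  also have "Heq \<dots> (fa_word (a_pow_word (p + 1) @ d_pow_word (q + 1)))"
    by (rule Heq_a_normal)
  finally show ?thesis by (simp add: x)
next
  assume x: "x = GDelInv"
  have "Heq (fa_word ([GDelInv] @ a_pow_word p @ d_pow_word q)) (fa_word (a_inv_word @ d_inv_word @ a_pow_word p @ d_pow_word q))"
    using Heq_word_cong[OF Heq_dinv_a_inv_d_inv, of "[]" "a_pow_word p @ d_pow_word q"] by simp
  also have "Heq \<dots> (fa_word (a_inv_word @ a_pow_word p @ d_pow_word (q - 1)))"
    using Heq_word_cong[OF Heq_d_inv_normal, where l=a_inv_word and r="[]"] by simp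
  also have "Heq \<dots> (fa_word (a_pow_word (p - 1) @ d_pow_word (q - 1)))"
    by (rule Heq_a_inv_normal)
  finally show ?thesis by (simp add: x)
qed (use Heq_a_normal Heq_d_normal in simp_all)

lemma Heq_normal_form:
  "set w \<subseteq> grouplike_gens \<Longrightarrow>
    Heq (fa_word w) (fa_word (a_pow_word (a_deg w) @ d_pow_word (d_deg w)) :: 'k::field fa)"
proof (induction w)
  case (Cons x w)
  then have IH: "Heq (fa_word w) (fa_word (a_pow_word (a_deg w) @ d_pow_word (d_deg w)) :: 'k fa)" by simp
  have "Heq (fa_word ([x] @ w)) (fa_word ([x] @ a_pow_word (a_deg w) @ d_pow_word (d_deg w)) :: 'k fa)"
    using Heq_word_cong[OF IH, where l="[x]" and r="[]"] by simp
  also have "Heq \<dots> (fa_word (a_pow_word (a_deg w + a_deg_gen x) @ d_pow_word (d_deg w + d_deg_gen x)))"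
    using Cons.prems by (intro Heq_gen_normal) simp
  finally show ?case by (simp add: a_deg_def d_deg_def add.commute)
qed (simp add: a_deg_def d_deg_def a_pow_word_def d_pow_word_def)

subsection \<open>Homogeneous components\<close>

definition tridegree :: "gen list \<Rightarrow> int \<times> int \<times> int" where
  "tridegree w = (b_deg w, a_deg w, d_deg w)"

lemma tridegree_append [simp]: "tridegree (u @ v) = tridegree u + tridegree v"
  by (simp add: tridegree_def b_deg_def a_deg_def d_deg_def)

definition homogeneous :: "int \<times> int \<times> int \<Rightarrow> 'k::field fa \<Rightarrow> bool" where
  "homogeneous K f \<longleftrightarrow> (\<forall>w. f w \<noteq> 0 \<longrightarrow> tridegree w = K)"

lemma homogeneous_word: "tridegree u = K \<Longrightarrow> homogeneous K (fa_word u)"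
  by (simp add: homogeneous_def fa_word_def)

lemma homogeneous_diff: "homogeneous K f \<Longrightarrow> homogeneous K g \<Longrightarrow> homogeneous K (f - g)"
  unfolding homogeneous_def by (metis diff_self minus_apply)

lemma homogeneous_fa_mult:
  assumes "homogeneous K f" "homogeneous K' g"
  shows "homogeneous (K + K') (fa_mult f g)"
  unfolding homogeneous_def
proof (intro allI impI)
  fix w assume "fa_mult f g w \<noteq> 0"
  then have "(\<Sum>(x,y)\<in>{(x,y). x @ y = w}. f x * g y) \<noteq> 0" by (simp add: fa_mult_conv conv_def)
  then obtain x y where "x @ y = w" "f x * g y \<noteq> 0"
    by (auto elim: sum.not_neutral_contains_not_neutral)
  then show "tridegree w = K + K'" using assms by (auto simp: homogeneous_def)
qed

lemma homogeneous_rel: "r \<in> bplus_rels \<Longrightarrow> \<exists>K. homogeneous K r"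
  unfolding bplus_rels_def fa_sub_eq
  by (elim insertE emptyE; hypsubst; rule exI; intro homogeneous_diff homogeneous_word;
      simp add: tridegree_def b_deg_def a_deg_def d_deg_def)

definition hcomp :: "int \<times> int \<times> int \<Rightarrow> 'k::field fa \<Rightarrow> 'k fa" where
  "hcomp K f = (\<lambda>w. if tridegree w = K then f w else 0)"

lemma hcomp_homogeneous: "homogeneous K' f \<Longrightarrow> hcomp K f = (if K' = K then f else 0)"
  by (auto simp: hcomp_def homogeneous_def fun_eq_iff)

lemma fa_mult3_expand:
  assumes "fsupp x" "fsupp y"
  shows "fa_mult (fa_mult x r) y =
    (\<Sum>p\<in>supp x. \<Sum>q\<in>supp y. fscale (x p * y q) (fa_mult (fa_mult (fa_word p) r) (fa_word q)))"
proof -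
  have "fa_mult (fa_mult x r) y =
      fa_mult (fa_mult (\<Sum>u\<in>supp x. fscale (x u) (fa_word u)) r) (\<Sum>u\<in>supp y. fscale (y u) (fa_word u))"
    using fa_expand_words_supp[OF assms(1)] fa_expand_words_supp[OF assms(2)] by simp
  also have "\<dots> = (\<Sum>p\<in>supp x. \<Sum>q\<in>supp y. fscale (x p * y q) (fa_mult (fa_mult (fa_word p) r) (fa_word q)))"
    by (simp only: fa_mult_conv conv_sum_left conv_sum_right conv_fscale_left conv_fscale_right
        fscale_sum fscale_fscale) (subst sum.swap, simp add: mult.commute)
  finally show ?thesis .
qed

text \<open>The ideal is graded, because it is generated by homogeneous elements.\<close>

lemma hcomp_Bideal: "f \<in> Bideal \<Longrightarrow> hcomp K f \<in> Bideal"
  unfolding Bideal_def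
proof (induction f rule: ideal_gen.induct)
  case zero then show ?case using ideal_gen.zero by (simp add: hcomp_def)
next
  case (add f g)
  have "hcomp K (fa_add f g) = fa_add (hcomp K f) (hcomp K g)" by (auto simp: hcomp_def fa_add_def fun_eq_iff)
  then show ?case using add.IH by (simp add: ideal_gen.add)
next
  case (gen r x y)
  obtain K' where h: "homogeneous K' r" using homogeneous_rel[OF gen(1)] by blast
  have "hcomp K (fa_mult (fa_mult x r) y) =
      (\<Sum>p\<in>supp x. \<Sum>q\<in>supp y. fscale (x p * y q) (hcomp K (fa_mult (fa_mult (fa_word p) r) (fa_word q))))"
    by (simp add: fa_mult3_expand[OF gen(2,3)] hcomp_def fun_eq_iff sum_fun_apply)
  also have "\<dots> \<in> Bideal"
  proof (intro Bideal_sum Bideal_fscale)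
    fix p q
    have "homogeneous (tridegree p + K' + tridegree q) (fa_mult (fa_mult (fa_word p) r) (fa_word q))"
      by (intro homogeneous_fa_mult homogeneous_word h refl)
    then show "hcomp K (fa_mult (fa_mult (fa_word p) r) (fa_word q)) \<in> Bideal"
      by (simp add: hcomp_homogeneous Bideal_gen gen(1))
  qed
  finally show ?case unfolding Bideal_def .
qed

definition c_part :: "'k::field fa \<Rightarrow> 'k fa" where
  "c_part f = (\<lambda>w. if GC \<in> set w then f w else 0)"

lemma c_part_Bideal: "fsupp f \<Longrightarrow> c_part f \<in> Bideal"
proof -
  assume "fsupp f"
  then have fs: "fsupp (c_part f)" unfolding fsupp_def c_part_def
    by (rule finite_subset[rotated]) auto
  have "c_part f = (\<Sum>u\<in>supp (c_part f). fscale (c_part f u) (fa_word u))"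
    by (rule fa_expand_words_supp[OF fs])
  also have "\<dots> \<in> Bideal"
    by (intro Bideal_sum Bideal_fscale word_with_c_in_Bideal) (auto simp: supp_def c_part_def split: if_splits)
  finally show ?thesis .
qed

definition cfree_hcomp :: "int \<times> int \<times> int \<Rightarrow> 'k::field fa \<Rightarrow> 'k fa" where
  "cfree_hcomp K f = (\<lambda>w. if tridegree w = K \<and> GC \<notin> set w then f w else 0)"

lemma cfree_hcomp_word: "cfree_hcomp K (fa_word u) = (if tridegree u = K \<and> GC \<notin> set u then fa_word u else 0)"
  by (auto simp: cfree_hcomp_def fun_eq_iff fa_word_def)

lemma cfree_hcomp_Bideal: "f \<in> Bideal \<Longrightarrow> cfree_hcomp K f \<in> Bideal"
proof -
  assume f: "f \<in> Bideal"
  have "cfree_hcomp K f = hcomp K f - c_part (hcomp K f)"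
    by (auto simp: cfree_hcomp_def hcomp_def c_part_def fun_eq_iff)
  also have "\<dots> \<in> Bideal"
    using hcomp_Bideal[OF f] by (intro Bideal_diff c_part_Bideal Bideal_fsupp)
  finally show ?thesis .
qed

lemma fa_decompose_cfree_hcomp:
  assumes "fsupp f"
  shows "f = c_part f + (\<Sum>K\<in>tridegree ` supp f. cfree_hcomp K f)"
proof
  fix w
  have fin: "finite (tridegree ` supp f)" using assms by (simp add: fsupp_iff_finite_supp)
  have "(\<Sum>K\<in>tridegree ` supp f. cfree_hcomp K f) w =
      (\<Sum>K\<in>tridegree ` supp f. if tridegree w = K then (if GC \<notin> set w then f w else 0) else 0)"
    by (simp add: sum_fun_apply cfree_hcomp_def)
  also have "\<dots> = (if tridegree w \<in> tridegree ` supp f \<and> GC \<notin> set w then f w else 0)"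
    using fin by (simp add: sum.delta')
  finally show "f w = (c_part f + (\<Sum>K\<in>tridegree ` supp f. cfree_hcomp K f)) w"
    by (auto simp: c_part_def supp_def)
qed

subsection \<open>The tensor square and the comultiplication\<close>

abbreviation tword :: "gen list \<Rightarrow> gen list \<Rightarrow> 'k::field fa2" where
  "tword u v \<equiv> fa_tensor (fa_word u) (fa_word v)"

lemma fa2_mult_tensor: "fa2_mult (fa_tensor p q) (fa_tensor p' q') = fa_tensor (fa_mult p p') (fa_mult q q')"
  by (auto simp: fa2_mult_def fa_tensor_def fa_mult_def fun_eq_iff sum_product algebra_simps intro!: sum.cong)

lemma fa2_mult_tword: "fa2_mult (tword a b) (tword c d) = tword (a @ c) (b @ d)"
  by (simp add: fa2_mult_tensor fa_mult_word)

lemma fa2_mult_add_left: "fa2_mult (P + Q) R = fa2_mult P R + fa2_mult Q R"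
  by (simp add: fa2_mult_conv conv_bilinear)
lemma fa2_mult_add_right: "fa2_mult R (P + Q) = fa2_mult R P + fa2_mult R Q"
  by (simp add: fa2_mult_conv conv_bilinear)
lemma fa2_mult_diff_left: "fa2_mult (P - Q) R = fa2_mult P R - fa2_mult Q R"
  by (simp add: fa2_mult_conv conv_bilinear)
lemma fa2_mult_diff_right: "fa2_mult R (P - Q) = fa2_mult R P - fa2_mult R Q"
  by (simp add: fa2_mult_conv conv_bilinear)
lemma fa2_mult_fscale_left: "fa2_mult (fscale c P) R = fscale c (fa2_mult P R)"
  by (simp add: fa2_mult_conv conv_bilinear)
lemma fa2_mult_fscale_right: "fa2_mult R (fscale c P) = fscale c (fa2_mult R P)"
  by (simp add: fa2_mult_conv conv_bilinear)
lemma fa2_mult_sum_left: "fa2_mult (sum F S) R = (\<Sum>i\<in>S. fa2_mult (F i) R)"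
  by (simp add: fa2_mult_conv conv_bilinear)
lemma fa2_mult_sum_right: "fa2_mult R (sum F S) = (\<Sum>i\<in>S. fa2_mult R (F i))"
  by (simp add: fa2_mult_conv conv_bilinear)

lemma fa_tensor_diff_left: "fa_tensor (p - p') q = fa_tensor p q - fa_tensor p' q"
  by (auto simp: fa_tensor_def fun_eq_iff algebra_simps)
lemma fa_tensor_diff_right: "fa_tensor p (q - q') = fa_tensor p q - fa_tensor p q'"
  by (auto simp: fa_tensor_def fun_eq_iff algebra_simps)
lemma fa_tensor_fscale_left: "fa_tensor (fscale c p) q = fscale c (fa_tensor p q)"
  by (auto simp: fa_tensor_def fun_eq_iff algebra_simps)
lemma fa_tensor_fscale_right: "fa_tensor p (fscale c q) = fscale c (fa_tensor p q)"
  by (auto simp: fa_tensor_def fun_eq_iff algebra_simps)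

lemma fsupp_fa_tensor [simp]: "fsupp p \<Longrightarrow> fsupp q \<Longrightarrow> fsupp (fa_tensor p q)"
  unfolding fsupp_def fa_tensor_def
  by (rule finite_subset[of _ "{x. p x \<noteq> 0} \<times> {x. q x \<noteq> 0}"]) auto

lemma fa2_expand_words:
  assumes "fsupp P"
  shows "P = (\<Sum>z\<in>supp P. fscale (P z) (tword (fst z) (snd z)))"
proof
  fix z0
  have "(\<Sum>z\<in>supp P. fscale (P z) (tword (fst z) (snd z))) z0 = (\<Sum>z\<in>supp P. if z = z0 then P z else 0)"
    unfolding sum_fun_apply
    by (intro sum.cong refl) (cases z0, auto simp: fa_tensor_def fa_word_def split_beta prod_eq_iff)
  also have "\<dots> = P z0" using assms by (auto simp: supp_def fsupp_iff_finite_supp)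
  finally show "P z0 = (\<Sum>z\<in>supp P. fscale (P z) (tword (fst z) (snd z))) z0" by simp
qed

lemma fsupp_fa2_mult [simp]:
  assumes "fsupp P" "fsupp Q"
  shows "fsupp (fa2_mult P Q)"
  by (subst fa2_expand_words[OF assms(1)], subst fa2_expand_words[OF assms(2)])
    (simp add: fa2_mult_sum_left fa2_mult_sum_right fa2_mult_fscale_left fa2_mult_fscale_right fa2_mult_tword)

abbreviation Bideal2 :: "'k::field fa2 set" where "Bideal2 \<equiv> tensor_ideal Bideal"

lemma Bideal2_zero [simp]: "0 \<in> Bideal2"
  using tensor_ideal.zero by (simp add: zero_fun_eq)
lemma Bideal2_add [simp]: "P \<in> Bideal2 \<Longrightarrow> Q \<in> Bideal2 \<Longrightarrow> P + Q \<in> Bideal2"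
  using tensor_ideal.add by (metis fa_add_eq)
lemma Bideal2_left: "p \<in> Bideal \<Longrightarrow> fsupp q \<Longrightarrow> fa_tensor p q \<in> Bideal2"
  by (rule tensor_ideal.left)
lemma Bideal2_right: "fsupp p \<Longrightarrow> q \<in> Bideal \<Longrightarrow> fa_tensor p q \<in> Bideal2"
  by (rule tensor_ideal.right)

lemma Bideal2_fscale [simp]: "P \<in> Bideal2 \<Longrightarrow> fscale c P \<in> Bideal2"
proof (induction P rule: tensor_ideal.induct)
  case (left p q) then show ?case unfolding fa_tensor_fscale_left[symmetric] by (intro Bideal2_left) auto
next
  case (right p q) then show ?case unfolding fa_tensor_fscale_right[symmetric] by (intro Bideal2_right) auto
next
  case (add P Q) then show ?case unfolding fa_add_eq fscale_add by (intro Bideal2_add)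
qed (simp add: zero_fun_eq)

lemma Bideal2_uminus [simp]: "P \<in> Bideal2 \<Longrightarrow> - P \<in> Bideal2"
  using Bideal2_fscale[of P "- 1"] by (simp add: fscale_minus_one)

lemma Bideal2_diff [simp]: "P \<in> Bideal2 \<Longrightarrow> Q \<in> Bideal2 \<Longrightarrow> P - Q \<in> Bideal2"
  unfolding diff_conv_add_uminus by (intro Bideal2_add Bideal2_uminus)

lemma Bideal2_sum: "(\<And>i. i \<in> S \<Longrightarrow> F i \<in> Bideal2) \<Longrightarrow> sum F S \<in> Bideal2"
  by (induction S rule: infinite_finite_induct) auto

lemma Bideal2_mult_left:
  assumes "P \<in> Bideal2" "fsupp Z"
  shows "fa2_mult Z P \<in> Bideal2"
  using assms(1)
proof (induction P rule: tensor_ideal.induct)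
  case (left p q)
  have "fa2_mult Z (fa_tensor p q) =
      (\<Sum>z\<in>supp Z. fscale (Z z) (fa_tensor (fa_mult (fa_word (fst z)) p) (fa_mult (fa_word (snd z)) q)))"
    by (subst fa2_expand_words[OF assms(2)]) (simp add: fa2_mult_sum_left fa2_mult_fscale_left fa2_mult_tensor)
  also have "\<dots> \<in> Bideal2" using left by (intro Bideal2_sum Bideal2_fscale Bideal2_left Bideal_mult_left) auto
  finally show ?case .
next
  case (right p q)
  have "fa2_mult Z (fa_tensor p q) =
      (\<Sum>z\<in>supp Z. fscale (Z z) (fa_tensor (fa_mult (fa_word (fst z)) p) (fa_mult (fa_word (snd z)) q)))"
    by (subst fa2_expand_words[OF assms(2)]) (simp add: fa2_mult_sum_left fa2_mult_fscale_left fa2_mult_tensor)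
  also have "\<dots> \<in> Bideal2" using right by (intro Bideal2_sum Bideal2_fscale Bideal2_right Bideal_mult_left) auto
  finally show ?case .
next
  case (add P Q) then show ?case unfolding fa_add_eq fa2_mult_add_right by (intro Bideal2_add)
qed (simp add: zero_fun_eq fa2_mult_conv)

lemma Bideal2_mult_right:
  assumes "P \<in> Bideal2" "fsupp Z"
  shows "fa2_mult P Z \<in> Bideal2"
  using assms(1)
proof (induction P rule: tensor_ideal.induct)
  case (left p q)
  have "fa2_mult (fa_tensor p q) Z =
      (\<Sum>z\<in>supp Z. fscale (Z z) (fa_tensor (fa_mult p (fa_word (fst z))) (fa_mult q (fa_word (snd z)))))"
    by (subst fa2_expand_words[OF assms(2)]) (simp add: fa2_mult_sum_right fa2_mult_fscale_right fa2_mult_tensor)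
  also have "\<dots> \<in> Bideal2" using left by (intro Bideal2_sum Bideal2_fscale Bideal2_left Bideal_mult_right) auto
  finally show ?case .
next
  case (right p q)
  have "fa2_mult (fa_tensor p q) Z =
      (\<Sum>z\<in>supp Z. fscale (Z z) (fa_tensor (fa_mult p (fa_word (fst z))) (fa_mult q (fa_word (snd z)))))"
    by (subst fa2_expand_words[OF assms(2)]) (simp add: fa2_mult_sum_right fa2_mult_fscale_right fa2_mult_tensor)
  also have "\<dots> \<in> Bideal2" using right by (intro Bideal2_sum Bideal2_fscale Bideal2_right Bideal_mult_right) auto
  finally show ?case .
next
  case (add P Q) then show ?case unfolding fa_add_eq fa2_mult_add_left by (intro Bideal2_add)
qed (simp add: zero_fun_eq fa2_mult_conv)

lemma HHeq_iff: "HHeq P Q \<longleftrightarrow> P - Q \<in> Bideal2"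
  by (simp add: HHeq_def fa_sub_eq)

lemma HHeq_refl [simp]: "HHeq P P"
  by (simp add: HHeq_iff)

lemma HHeq_sym: "HHeq P Q \<Longrightarrow> HHeq Q P"
  unfolding HHeq_iff by (drule Bideal2_uminus) simp

lemma HHeq_trans [trans]: "HHeq P Q \<Longrightarrow> HHeq Q R \<Longrightarrow> HHeq P R"
  unfolding HHeq_iff by (drule (1) Bideal2_add) simp

lemma HHeq_add: "HHeq P P' \<Longrightarrow> HHeq Q Q' \<Longrightarrow> HHeq (P + Q) (P' + Q')"
  unfolding HHeq_iff by (drule (1) Bideal2_add) (simp add: algebra_simps)

lemma HHeq_fa2_mult:
  assumes "HHeq P P'" "HHeq Q Q'" "fsupp P'" "fsupp Q"
  shows "HHeq (fa2_mult P Q) (fa2_mult P' Q')"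
proof -
  have "fa2_mult (P - P') Q + fa2_mult P' (Q - Q') \<in> Bideal2"
    using assms unfolding HHeq_iff by (intro Bideal2_add Bideal2_mult_right Bideal2_mult_left)
  then show ?thesis by (simp add: HHeq_iff fa2_mult_diff_left fa2_mult_diff_right)
qed

lemma HHeq_tword:
  assumes "Heq (fa_word u) (fa_word u' :: 'k::field fa)" "Heq (fa_word v) (fa_word v' :: 'k fa)"
  shows "HHeq (tword u v) (tword u' v' :: 'k fa2)"
proof -
  have "fa_tensor (fa_word u - fa_word u') (fa_word v) + fa_tensor (fa_word u') (fa_word v - fa_word v')
      \<in> (Bideal2 :: 'k fa2 set)"
    using assms unfolding Heq_iff by (intro Bideal2_add Bideal2_left Bideal2_right) auto
  then show ?thesis by (simp add: HHeq_iff fa_tensor_diff_left fa_tensor_diff_right)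
qed

lemma fsupp_delta_gen [simp]: "fsupp (delta_gen x)"
  by (cases x) (auto simp: fa_add_eq)

lemma delta_word_Nil [simp]: "delta_word [] = tword [] []"
  by (simp add: delta_word_def fa2_one_def)

lemma delta_word_Cons: "delta_word (x # w) = fa2_mult (delta_gen x) (delta_word w)"
  by (simp add: delta_word_def)

lemma fsupp_delta_word [simp]: "fsupp (delta_word w)"
  by (induction w) (auto simp: delta_word_Cons)

lemma delta_word_append: "delta_word (u @ v) = fa2_mult (delta_word u) (delta_word v)"
proof (induction u)
  case Nil
  have "fa2_mult (tword [] []) P = P" for P :: "'a fa2"
    by (simp add: fa2_mult_def fa_tensor_def fa_word_def fun_eq_iff take_eq_Nil)
      (simp add: sum.atMost_shift)
  then show ?case by simp
qed (simp add: delta_word_Cons fa2_mult_assoc)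

lemma fa_Delta_superset:
  assumes "finite S" "supp f \<subseteq> S"
  shows "fa_Delta f = (\<Sum>w\<in>S. fscale (f w) (delta_word w))"
proof
  fix uv
  have "fa_Delta f uv = (\<Sum>w\<in>S. f w * delta_word w uv)"
    unfolding fa_Delta_def using assms by (intro sum.mono_neutral_left) (auto simp: supp_def)
  then show "fa_Delta f uv = (\<Sum>w\<in>S. fscale (f w) (delta_word w)) uv"
    by (simp add: sum_fun_apply)
qed

lemma fa_Delta_add: "fsupp f \<Longrightarrow> fsupp g \<Longrightarrow> fa_Delta (f + g) = fa_Delta f + fa_Delta g"
  by (subst (1 2 3) fa_Delta_superset[where S="supp f \<union> supp g"])
    (auto simp: fsupp_iff_finite_supp supp_def fun_eq_iff algebra_simps sum_fun_apply sum.distrib)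
lemma fa_Delta_diff: "fsupp f \<Longrightarrow> fsupp g \<Longrightarrow> fa_Delta (f - g) = fa_Delta f - fa_Delta g"
  by (subst (1 2 3) fa_Delta_superset[where S="supp f \<union> supp g"])
    (auto simp: fsupp_iff_finite_supp supp_def fun_eq_iff algebra_simps sum_fun_apply sum_subtractf)
lemma fa_Delta_fscale: "fsupp f \<Longrightarrow> fa_Delta (fscale c f) = fscale c (fa_Delta f)"
  by (subst (1 2) fa_Delta_superset[where S="supp f"])
    (auto simp: fsupp_iff_finite_supp supp_def fun_eq_iff algebra_simps sum_fun_apply sum_distrib_left)
lemma fa_Delta_zero [simp]: "fa_Delta 0 = 0"
  by (simp add: fa_Delta_def fun_eq_iff)
lemma fa_Delta_sum: "(\<And>i. i \<in> S \<Longrightarrow> fsupp (F i)) \<Longrightarrow> fa_Delta (sum F S) = (\<Sum>i\<in>S. fa_Delta (F i))"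
  by (induction S rule: infinite_finite_induct) (auto simp: fa_Delta_add)
lemma fa_Delta_word [simp]: "fa_Delta (fa_word u) = delta_word u"
  by (subst fa_Delta_superset[where S="{u}"]) (auto simp: supp_def fa_word_def)

lemma fsupp_fa_Delta: "fsupp f \<Longrightarrow> fsupp (fa_Delta f)"
  by (subst fa_Delta_superset[where S="supp f"]) (simp_all add: fsupp_iff_finite_supp[symmetric])

lemma fa_Delta_fa_mult:
  assumes "fsupp f" "fsupp g"
  shows "fa_Delta (fa_mult f g) = fa2_mult (fa_Delta f) (fa_Delta g)"
proof -
  have "fa_Delta (fa_mult f g) =
      (\<Sum>p\<in>supp f. \<Sum>q\<in>supp g. fscale (f p * g q) (fa2_mult (delta_word p) (delta_word q)))"
    by (subst fa_mult_expand[OF assms]) (simp add: fa_Delta_sum fa_Delta_fscale delta_word_append)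
  also have "\<dots> = fa2_mult (\<Sum>p\<in>supp f. fscale (f p) (delta_word p)) (\<Sum>q\<in>supp g. fscale (g q) (delta_word q))"
    by (simp add: fa2_mult_sum_left fa2_mult_sum_right fa2_mult_fscale_left fa2_mult_fscale_right fscale_sum)
      (subst (2) sum.swap, simp add: mult.commute)
  also have "\<dots> = fa2_mult (fa_Delta f) (fa_Delta g)"
    using assms by (simp add: fa_Delta_superset[where S="supp f"] fa_Delta_superset[where S="supp g"]
        fsupp_iff_finite_supp)
  finally show ?thesis .
qed

text \<open>Modulo \<open>c\<close>, a word \<open>w\<close> has the coproduct obtained from the grouplike coproducts of
  \<open>a, d, \<delta>\<^sup>\<plusminus>\<^sup>1\<close> and \<open>\<Delta>(b) = a \<otimes> b + b \<otimes> d\<close>.\<close>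

fun delta_c_free :: "gen list \<Rightarrow> 'k::field fa2" where
  "delta_c_free [] = tword [] []"
| "delta_c_free (x # w) =
     fa2_mult (if x = GB then tword [GA] [GB] + tword [GB] [GD] else tword [x] [x]) (delta_c_free w)"

lemma fsupp_delta_c_free [simp]: "fsupp (delta_c_free w)"
  by (induction w) auto

lemma HHeq_delta_gen_a: "HHeq (delta_gen GA) (tword [GA] [GA])"
  by (simp add: HHeq_iff fa_add_eq Bideal2_right word_with_c_in_Bideal)

lemma HHeq_delta_gen_d: "HHeq (delta_gen GD) (tword [GD] [GD])"
  by (simp add: HHeq_iff fa_add_eq Bideal2_left word_with_c_in_Bideal)

lemma HHeq_delta_gen_grouplike: "x \<in> grouplike_gens \<Longrightarrow> HHeq (delta_gen x) (tword [x] [x])"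
  unfolding grouplike_gens_def using HHeq_delta_gen_a HHeq_delta_gen_d by auto

lemma HHeq_delta_word_c_free: "GC \<notin> set w \<Longrightarrow> HHeq (delta_word w) (delta_c_free w)"
proof (induction w)
  case (Cons x w)
  have "HHeq (delta_gen x) (if x = GB then tword [GA] [GB] + tword [GB] [GD] else tword [x] [x])"
  proof (cases "x = GB")
    case False
    with Cons.prems have "x \<in> grouplike_gens" by (cases x) (auto simp: grouplike_gens_def)
    with False show ?thesis by (simp add: HHeq_delta_gen_grouplike)
  qed (simp add: fa_add_eq)
  with Cons show ?case unfolding delta_word_Cons delta_c_free.simps by (intro HHeq_fa2_mult) auto
qed simp

lemma delta_c_free_grouplike: "set w \<subseteq> grouplike_gens \<Longrightarrow> delta_c_free w = tword w w"
  by (induction w) (auto simp: fa2_mult_tword)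

lemma delta_word_c_in_Bideal2: "GC \<in> set w \<Longrightarrow> delta_word w \<in> Bideal2"
proof (induction w)
  case (Cons x w)
  have "delta_gen GC \<in> Bideal2"
    by (simp add: fa_add_eq) (intro Bideal2_add Bideal2_left Bideal2_right word_with_c_in_Bideal, auto)
  then show ?case
    using Cons by (cases "x = GC") (auto simp: delta_word_Cons intro: Bideal2_mult_left Bideal2_mult_right)
qed simp

lemma HHeq_delta_word_grouplike: "set w \<subseteq> grouplike_gens \<Longrightarrow> HHeq (delta_word w) (tword w w)"
  using HHeq_delta_word_c_free delta_c_free_grouplike by (metis grouplike_gens_simps(6) subsetD)

lemma fa_Delta_diff_c_words: "GC \<in> set u \<Longrightarrow> GC \<in> set v \<Longrightarrow> fa_Delta (fa_word u - fa_word v) \<in> Bideal2"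
  by (simp add: fa_Delta_diff delta_word_c_in_Bideal2)

lemma fa_Delta_diff_c_free:
  assumes "GC \<notin> set u" "GC \<notin> set v" "HHeq (delta_c_free u) (delta_c_free v :: 'k::field fa2)"
  shows "fa_Delta (fa_word u - fa_word v) \<in> (Bideal2 :: 'k fa2 set)"
proof -
  have "HHeq (delta_word u) (delta_word v :: 'k fa2)"
    using HHeq_delta_word_c_free[OF assms(1)] assms(3) HHeq_sym[OF HHeq_delta_word_c_free[OF assms(2)]]
    by (blast intro: HHeq_trans)
  then show ?thesis by (simp add: fa_Delta_diff HHeq_iff)
qed

lemma fa_Delta_diff_grouplike:
  assumes "set u \<subseteq> grouplike_gens" "set v \<subseteq> grouplike_gens" "Heq (fa_word u) (fa_word v :: 'k::field fa)"
  shows "fa_Delta (fa_word u - fa_word v) \<in> (Bideal2 :: 'k fa2 set)"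
proof (rule fa_Delta_diff_c_free)
  show "GC \<notin> set u" "GC \<notin> set v" using assms(1,2) by auto
  show "HHeq (delta_c_free u) (delta_c_free v :: 'k fa2)"
    using assms by (simp add: delta_c_free_grouplike HHeq_tword)
qed

lemma fa_Delta_diff3:
  assumes "GC \<in> set w" "fa_Delta (fa_word u - fa_word v) \<in> (Bideal2 :: 'k::field fa2 set)"
  shows "fa_Delta (fa_word u - fa_word w - fa_word v) \<in> (Bideal2 :: 'k fa2 set)"
proof -
  have "fa_Delta (fa_word u - fa_word w - fa_word v) = fa_Delta (fa_word u - fa_word v) - (delta_word w :: 'k fa2)"
    by (simp add: fa_Delta_diff)
  then show ?thesis using Bideal2_diff[OF assms(2) delta_word_c_in_Bideal2[OF assms(1)]] by simp
qed

lemma fa_Delta_rel: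
  assumes "r \<in> (bplus_rels :: 'k::field fa set)"
  shows "fa_Delta r \<in> Bideal2"
proof -
  have "fa_Delta (fa_word [GA,GC] - fa_word [GC,GA]) \<in> (Bideal2 :: 'k fa2 set)"
    by (rule fa_Delta_diff_c_words) simp_all
  moreover have "fa_Delta (fa_word [GB,GD] - fa_word [GD,GB]) \<in> (Bideal2 :: 'k fa2 set)"
  proof (rule fa_Delta_diff_c_free)
    show "HHeq (delta_c_free [GB,GD]) (delta_c_free [GD,GB] :: 'k fa2)"
      using HHeq_add[OF HHeq_tword[OF Heq_ad_da rel_bd] HHeq_tword[OF rel_bd Heq_refl]]
      by (simp add: fa2_mult_add_left fa2_mult_add_right fa2_mult_tword)
  qed simp_all
  moreover have "fa_Delta (fa_word [GA,GD] - fa_word [GC,GB] - fa_word [GDel]) \<in> (Bideal2 :: 'k fa2 set)"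
    by (intro fa_Delta_diff3 fa_Delta_diff_grouplike rel_ad) simp_all
  moreover have "fa_Delta (fa_word [GD,GA] - fa_word [GB,GC] - fa_word [GDel]) \<in> (Bideal2 :: 'k fa2 set)"
    by (intro fa_Delta_diff3 fa_Delta_diff_grouplike rel_da) simp_all
  moreover have "fa_Delta (fa_word [GDel,GDelInv] - fa_one) \<in> (Bideal2 :: 'k fa2 set)"
    by (intro fa_Delta_diff_grouplike rel_delta_dinv) simp_all
  moreover have "fa_Delta (fa_word [GDelInv,GDel] - fa_one) \<in> (Bideal2 :: 'k fa2 set)"
    by (intro fa_Delta_diff_grouplike rel_dinv_delta) simp_all
  moreover have "fa_Delta (fa_word [GA,GDelInv,GD] - fa_word [GB,GDelInv,GC] - fa_one) \<in> (Bideal2 :: 'k fa2 set)"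
    by (intro fa_Delta_diff3 fa_Delta_diff_grouplike rel_a_dinv_d) simp_all
  moreover have "fa_Delta (fa_word [GD,GDelInv,GA] - fa_word [GC,GDelInv,GB] - fa_one) \<in> (Bideal2 :: 'k fa2 set)"
    by (intro fa_Delta_diff3 fa_Delta_diff_grouplike rel_d_dinv_a) simp_all
  moreover have "fa_Delta (fa_word [GB,GDelInv,GA] - fa_word [GA,GDelInv,GB]) \<in> (Bideal2 :: 'k fa2 set)"
  proof (rule fa_Delta_diff_c_free)
    have "Heq (fa_word [GD,GDelInv,GA]) (fa_word [GA,GDelInv,GD] :: 'k fa)"
      by (rule Heq_trans[OF rel_d_dinv_a Heq_sym[OF rel_a_dinv_d]])
    then show "HHeq (delta_c_free [GB,GDelInv,GA]) (delta_c_free [GA,GDelInv,GB] :: 'k fa2)"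
      using HHeq_add[OF HHeq_tword[OF Heq_refl rel_b_dinv_a] HHeq_tword[OF rel_b_dinv_a]]
      by (simp add: fa2_mult_add_left fa2_mult_add_right fa2_mult_tword)
  qed simp_all
  moreover have "fa_Delta (fa_word [GC,GDelInv,GD] - fa_word [GD,GDelInv,GC]) \<in> (Bideal2 :: 'k fa2 set)"
    by (rule fa_Delta_diff_c_words) simp_all
  moreover have "fa_Delta (fa_word [GC]) \<in> (Bideal2 :: 'k fa2 set)"
    by (simp add: delta_word_c_in_Bideal2)
  ultimately show ?thesis using assms unfolding bplus_rels_def fa_sub_eq by blast
qed

lemma fa_Delta_Bideal: "f \<in> Bideal \<Longrightarrow> fa_Delta f \<in> Bideal2"
  unfolding Bideal_def
proof (induction f rule: ideal_gen.induct)
  case zero then show ?case by (simp add: zero_fun_eq flip: Bideal_def)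
next
  case (add f g)
  have "fsupp f" "fsupp g" using add Bideal_fsupp unfolding Bideal_def by auto
  then show ?case using add.IH unfolding fa_add_eq by (subst fa_Delta_add) (simp_all flip: Bideal_def)
next
  case (gen r x y)
  have "fa_Delta (fa_mult (fa_mult x r) y) = fa2_mult (fa2_mult (fa_Delta x) (fa_Delta r)) (fa_Delta y)"
    using gen fsupp_rel[OF gen(1)] by (simp add: fa_Delta_fa_mult)
  also have "\<dots> \<in> Bideal2"
    using gen fsupp_rel[OF gen(1)]
    by (intro Bideal2_mult_right Bideal2_mult_left fa_Delta_rel fsupp_fa_Delta fsupp_fa2_mult)
  finally show ?case unfolding Bideal_def .
qed

definition eps_word :: "gen list \<Rightarrow> 'k::field" where
  "eps_word w = prod_list (map eps_gen w)"

lemma fa_eps_lin_ext: "fa_eps f = lin_ext eps_word f"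
  by (simp add: fa_eps_def lin_ext_def supp_def eps_word_def)

lemma fa_eps_Bideal: "f \<in> Bideal \<Longrightarrow> fa_eps f = (0 :: 'k::field)"
  unfolding Bideal_def fa_eps_lin_ext
proof (induction f rule: ideal_gen.induct)
  case zero then show ?case by (simp add: lin_ext_def supp_def)
next
  case (add f g)
  have "fsupp f" "fsupp g" using add Bideal_fsupp unfolding Bideal_def by auto
  then show ?case using add.IH unfolding fa_add_eq by (subst lin_ext_add) simp_all
next
  case (gen r x y)
  have "lin_ext eps_word r = 0" using gen(1)
    unfolding bplus_rels_def fa_sub_eq
    by (elim insertE emptyE; hypsubst; simp add: lin_ext_diff eps_word_def)
  moreover have "eps_word (p @ q) = (eps_word p * eps_word q :: 'k)" for p q
    by (simp add: eps_word_def)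
  ultimately show ?case using gen fsupp_rel[OF gen(1)] by (simp add: lin_ext_fa_mult fsupp_fa_mult)
qed

lemma grouplike_word:
  assumes "set v \<subseteq> grouplike_gens"
  shows "grouplike (fa_word v)"
proof -
  have "eps_word v = 1"
    using assms by (induction v) (auto simp: eps_word_def grouplike_gens_def)
  then show ?thesis
    using HHeq_delta_word_grouplike[OF assms] by (simp add: grouplike_def fa_eps_lin_ext)
qed

lemma take_eq_single_iff: "i \<le> length u \<Longrightarrow> take i u = [x] \<longleftrightarrow> i = 1 \<and> u \<noteq> [] \<and> hd u = x"
  by (cases u; cases i) auto

lemma sum_atMost_indicator_one: "(\<Sum>j\<le>k. if j = (1::nat) then X else 0) = (if 1 \<le> k then X else 0)"
  by (induction k) auto

lemma sum_atMost_indicator_one_one: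
  "(\<Sum>i\<le>(m::nat). \<Sum>j\<le>(k::nat). if i = 1 \<and> j = 1 then X else 0) = (if 1 \<le> m \<and> 1 \<le> k then X else 0)"
proof -
  have "(\<Sum>j\<le>k. if i = 1 \<and> j = 1 then X else 0) = (if i = 1 \<and> 1 \<le> k then X else 0)" for i :: nat
    by (cases "i = 1") (simp_all add: sum_atMost_indicator_one)
  then show ?thesis by (cases "1 \<le> k") (simp_all add: sum_atMost_indicator_one)
qed

lemma fa2_mult_tword_single_apply:
  "fa2_mult (tword [x] [y]) P (u, v) = (if u \<noteq> [] \<and> v \<noteq> [] \<and> hd u = x \<and> hd v = y then P (tl u, tl v) else 0)"
proof -
  have "fa2_mult (tword [x] [y]) P (u, v) = (\<Sum>i\<le>length u. \<Sum>j\<le>length v.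
      if i = 1 \<and> j = 1 then (if u \<noteq> [] \<and> v \<noteq> [] \<and> hd u = x \<and> hd v = y then P (tl u, tl v) else 0) else 0)"
    unfolding fa2_mult_def fa_tensor_def fa_word_def prod.case
    by (intro sum.cong refl) (auto simp: take_eq_single_iff drop_Suc)
  also have "\<dots> = (if u \<noteq> [] \<and> v \<noteq> [] \<and> hd u = x \<and> hd v = y then P (tl u, tl v) else 0)"
    by (simp only: sum_atMost_indicator_one_one) (cases u; cases v; simp)
  finally show ?thesis .
qed

definition b_to_d :: "gen list \<Rightarrow> gen list" where
  "b_to_d w = map (\<lambda>x. if x = GB then GD else x) w"

lemma b_deg_Cons [simp]: "b_deg (x # w) = b_deg_gen x + b_deg w"
  by (simp add: b_deg_def)

lemma b_deg_Nil [simp]: "b_deg [] = 0"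
  by (simp add: b_deg_def)

lemma delta_c_free_supp:
  "GC \<notin> set w \<Longrightarrow> delta_c_free w (u, v) \<noteq> (0::'k::field) \<Longrightarrow>
     GC \<notin> set u \<and> b_deg u \<le> b_deg w \<and> (b_deg u = b_deg w \<longrightarrow> u = w \<and> v = b_to_d w)"
proof (induction w arbitrary: u v)
  case Nil then show ?case by (auto simp: fa_tensor_def fa_word_def b_to_d_def split: if_splits)
next
  case (Cons x w)
  from Cons.prems have x: "x \<noteq> GC" and wc: "GC \<notin> set w" by auto
  have ne: "u \<noteq> []" "v \<noteq> []" using Cons.prems(2)
    by (auto simp: fa2_mult_tword_single_apply fa2_mult_add_left split: if_splits)
  obtain a u' where u: "u = a # u'" using ne by (cases u) auto
  obtain b v' where v: "v = b # v'" using ne by (cases v) auto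
  show ?case
  proof (cases "x = GB")
    case True
    then have "(a = GA \<and> b = GB \<or> a = GB \<and> b = GD) \<and> delta_c_free w (u', v') \<noteq> (0::'k)"
      using Cons.prems(2) by (auto simp: u v fa2_mult_tword_single_apply fa2_mult_add_left split: if_splits)
    then show ?thesis using Cons.IH[OF wc, of u' v'] True by (auto simp: u v b_to_d_def)
  next
    case False
    then have "a = x \<and> b = x \<and> delta_c_free w (u', v') \<noteq> (0::'k)"
      using Cons.prems(2) by (auto simp: u v fa2_mult_tword_single_apply split: if_splits)
    moreover have "b_deg_gen x = 0" using x False by (cases x) auto
    ultimately show ?thesis using Cons.IH[OF wc, of u' v'] False x by (auto simp: u v b_to_d_def)
  qed
qed

lemma delta_c_free_top: "GC \<notin> set w \<Longrightarrow> delta_c_free w (w, b_to_d w) = 1"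
proof (induction w)
  case Nil then show ?case by (simp add: fa_tensor_def fa_word_def b_to_d_def)
next
  case (Cons x w)
  then show ?case by (auto simp: fa2_mult_tword_single_apply fa2_mult_add_left b_to_d_def)
qed

lemma b_to_d_grouplike: "GC \<notin> set w \<Longrightarrow> set (b_to_d w) \<subseteq> grouplike_gens"
proof (induction w)
  case (Cons x w) then show ?case by (cases x) (auto simp: b_to_d_def grouplike_gens_def)
qed (simp add: b_to_d_def)

lemma a_deg_b_to_d [simp]: "a_deg (b_to_d w) = a_deg w"
  by (induction w) (auto simp: b_to_d_def a_deg_def)

lemma d_deg_b_to_d [simp]: "d_deg (b_to_d w) = d_deg w"
  by (induction w) (auto simp: b_to_d_def d_deg_def)

subsection \<open>Functionals concentrated in one degree\<close>

lemma separating_functional: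
  assumes "h \<notin> Bideal"
  obtains \<psi> :: "'k::field fa \<Rightarrow> 'k"
  where "\<And>f g. \<psi> (f + g) = \<psi> f + \<psi> g" "\<And>c f. \<psi> (fscale c f) = c * \<psi> f"
    and "\<And>f. f \<in> Bideal \<Longrightarrow> \<psi> f = 0" "\<psi> h = 1"
proof -
  interpret V: vector_space "fscale :: 'k \<Rightarrow> 'k fa \<Rightarrow> 'k fa"
    by unfold_locales (auto simp: fscale_def fun_eq_iff algebra_simps)
  interpret P: vector_space_pair "fscale :: 'k \<Rightarrow> 'k fa \<Rightarrow> 'k fa" "(*) :: 'k \<Rightarrow> 'k \<Rightarrow> 'k"
    by unfold_locales (auto simp: fscale_def fun_eq_iff algebra_simps)
  have "V.subspace Bideal" by (rule V.subspaceI) auto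
  obtain B where B: "B \<subseteq> Bideal" "V.independent B" "Bideal \<subseteq> V.span B"
    by (rule V.maximal_independent_subset)
  have "h \<notin> V.span B" using V.span_minimal[OF B(1) \<open>V.subspace Bideal\<close>] assms by auto
  then have "V.independent (insert h B)" by (rule V.independent_insertI[OF _ B(2)])
  then obtain g where g: "Vector_Spaces.linear fscale (*) g" "\<forall>x\<in>insert h B. g x = (if x = h then 1 else 0)"
    using P.linear_independent_extend[of "insert h B" "\<lambda>x. if x = h then 1 else 0"] by blast
  have "g x = 0" if "x \<in> B" for x using g(2) that \<open>h \<notin> V.span B\<close> by (auto dest: V.span_base)
  then have "g f = 0" if "f \<in> Bideal" for f
    using P.linear_eq_0_on_span[OF g(1)] B(3) that by auto
  then show ?thesis
    using that[of g] P.linear_add[OF g(1)] P.linear_scale[OF g(1)] g(2) by simp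
qed

locale top_functional =
  fixes \<phi> :: "'k::field fa \<Rightarrow> 'k" and n p q :: int
  assumes phi_add: "\<phi> (f + g) = \<phi> f + \<phi> g"
    and phi_fscale: "\<phi> (fscale c f) = c * \<phi> f"
    and phi_Bideal: "f \<in> Bideal \<Longrightarrow> \<phi> f = 0"
    and phi_word: "\<phi> (fa_word u) \<noteq> 0 \<Longrightarrow> GC \<notin> set u \<and> tridegree u = (n, p, q)"
begin

lemma phi_zero: "\<phi> 0 = 0"
  using phi_fscale[of 0 0] by simp

lemma phi_sum: "\<phi> (sum F S) = (\<Sum>i\<in>S. \<phi> (F i))"
proof (induction S rule: infinite_finite_induct)
  case (insert x A) then show ?case by (simp only: sum.insert[OF insert(1,2)] phi_add)
qed (simp_all add: phi_zero zero_fun_eq)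

lemma phi_expand: "finite S \<Longrightarrow> supp f \<subseteq> S \<Longrightarrow> \<phi> f = (\<Sum>u\<in>S. f u * \<phi> (fa_word u))"
  by (subst fa_expand_words[of S f]) (simp_all add: phi_sum phi_fscale)

text \<open>\<open>contract\<close> is \<open>\<phi> \<otimes> id\<close>.\<close>

definition contract :: "'k fa2 \<Rightarrow> 'k fa" where
  "contract P = (\<lambda>v. \<phi> (\<lambda>u. P (u, v)))"

lemma contract_add: "contract (P + Q) = contract P + contract Q"
proof
  fix v
  have "(\<lambda>u. (P + Q) (u, v)) = (\<lambda>u. P (u, v)) + (\<lambda>u. Q (u, v))" by (simp add: fun_eq_iff)
  then show "contract (P + Q) v = (contract P + contract Q) v" by (simp add: contract_def phi_add)
qed

lemma contract_fscale: "contract (fscale c P) = fscale c (contract P)"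
proof
  fix v
  have "(\<lambda>u. fscale c P (u, v)) = fscale c (\<lambda>u. P (u, v))" by (simp add: fun_eq_iff)
  then show "contract (fscale c P) v = fscale c (contract P) v" by (simp add: contract_def phi_fscale)
qed

lemma contract_zero: "contract 0 = 0"
  using contract_fscale[of 0 0] by simp

lemma contract_diff: "contract (P - Q) = contract P - contract Q"
  using contract_add[of P "fscale (- 1) Q"] contract_fscale[of "- 1" Q] by (simp add: fscale_minus_one)

lemma contract_sum: "contract (sum F S) = (\<Sum>i\<in>S. contract (F i))"
proof (induction S rule: infinite_finite_induct)
  case (insert x A) then show ?case by (simp only: sum.insert[OF insert(1,2)] contract_add)
qed (simp_all add: contract_zero zero_fun_eq)

lemma contract_tensor: "contract (fa_tensor f g) = fscale (\<phi> f) g"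
proof
  fix v
  have "(\<lambda>u. fa_tensor f g (u, v)) = fscale (g v) f" by (simp add: fun_eq_iff fa_tensor_def mult.commute)
  then show "contract (fa_tensor f g) v = fscale (\<phi> f) g v" by (simp add: contract_def phi_fscale mult.commute)
qed

lemma contract_Bideal2: "P \<in> Bideal2 \<Longrightarrow> contract P \<in> Bideal"
proof (induction P rule: tensor_ideal.induct)
  case zero then show ?case using contract_zero by (simp add: zero_fun_eq)
next
  case (left f g) then show ?case by (simp add: contract_tensor phi_Bideal zero_fun_eq)
next
  case (right f g) then show ?case by (simp only: contract_tensor Bideal_fscale)
next
  case (add P Q) then show ?case unfolding fa_add_eq contract_add by (intro Bideal_add)
qed

lemma Heq_contract: "HHeq P Q \<Longrightarrow> Heq (contract P) (contract Q)"
  unfolding HHeq_iff Heq_iff by (drule contract_Bideal2) (simp add: contract_diff)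

lemma contract_fa_Delta: "fsupp f \<Longrightarrow> contract (fa_Delta f) = (\<Sum>w\<in>supp f. fscale (f w) (contract (delta_word w)))"
  by (subst fa_Delta_superset[where S="supp f"]) (auto simp: fsupp_iff_finite_supp contract_sum contract_fscale)

end

context top_functional
begin

lemma phi_diff: "\<phi> (f - g) = \<phi> f - \<phi> g"
  using phi_add[of "f - g" g] by simp

lemma contract_delta_c_free:
  assumes c: "GC \<notin> set w" and low: "b_deg w \<le> n"
  shows "contract (delta_c_free w) = fscale (\<phi> (fa_word w)) (fa_word (b_to_d w))"
proof
  fix v
  let ?s = "\<lambda>u. delta_c_free w (u, v) :: 'k"
  let ?S = "insert w (fst ` supp (delta_c_free w :: 'k fa2))"
  have "fsupp (delta_c_free w :: 'k fa2)" by simp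
  then have fin: "finite ?S" by (simp add: fsupp_iff_finite_supp)
  have coeff: "?s u * \<phi> (fa_word u) = (if u = w \<and> v = b_to_d w then \<phi> (fa_word w) else 0)" for u
  proof (cases "u = w \<and> v = b_to_d w")
    case False
    show ?thesis
    proof (rule ccontr)
      assume "?s u * \<phi> (fa_word u) \<noteq> (if u = w \<and> v = b_to_d w then \<phi> (fa_word w) else 0)"
      then have "?s u \<noteq> 0" "\<phi> (fa_word u) \<noteq> 0" using False by auto
      then show False
        using delta_c_free_supp[OF c] phi_word low False by (fastforce simp: tridegree_def)
    qed
  qed (simp add: delta_c_free_top[OF c])
  have "contract (delta_c_free w) v = (\<Sum>u\<in>?S. ?s u * \<phi> (fa_word u))"
    unfolding contract_def using fin by (intro phi_expand) (force simp: supp_def)+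
  also have "\<dots> = (\<Sum>u\<in>?S. if u = w \<and> v = b_to_d w then \<phi> (fa_word w) else 0)"
    by (simp only: coeff)
  also have "\<dots> = fscale (\<phi> (fa_word w)) (fa_word (b_to_d w)) v"
    using fin by (auto simp: fa_word_def sum.delta)
  finally show "contract (delta_c_free w) v = fscale (\<phi> (fa_word w)) (fa_word (b_to_d w)) v" .
qed

lemma Heq_contract_delta_word:
  assumes "GC \<in> set w \<or> b_deg w \<le> n"
  shows "Heq (contract (delta_word w)) (fscale (\<phi> (fa_word w)) (fa_word (b_to_d w)))"
proof (cases "GC \<in> set w")
  case True
  then have "\<phi> (fa_word w) = 0" using phi_word by blast
  then show ?thesis using contract_Bideal2[OF delta_word_c_in_Bideal2[OF True]] by (simp add: Heq_iff)
next
  case False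
  then show ?thesis
    using Heq_contract[OF HHeq_delta_word_c_free[OF False]] contract_delta_c_free[OF False] assms by simp
qed

lemma Heq_b_to_d:
  assumes "\<phi> (fa_word w) \<noteq> 0"
  shows "Heq (fa_word (b_to_d w)) (fa_word (a_pow_word p @ d_pow_word q) :: 'k fa)"
proof -
  have c: "GC \<notin> set w" and "a_deg w = p" "d_deg w = q"
    using phi_word[OF assms] by (auto simp: tridegree_def)
  then show ?thesis using Heq_normal_form[OF b_to_d_grouplike[OF c]] by simp
qed

lemma Heq_contract_fa_Delta_low:
  assumes "fsupp f" and low: "\<And>w. w \<in> supp f \<Longrightarrow> GC \<in> set w \<or> b_deg w \<le> n"
  shows "Heq (contract (fa_Delta f)) (fscale (\<phi> f) (fa_word (a_pow_word p @ d_pow_word q)))"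
proof -
  let ?g = "fa_word (a_pow_word p @ d_pow_word q) :: 'k fa"
  have "Heq (contract (fa_Delta f)) (\<Sum>w\<in>supp f. fscale (f w) (fscale (\<phi> (fa_word w)) (fa_word (b_to_d w))))"
    unfolding contract_fa_Delta[OF assms(1)] using low by (intro Heq_sum Heq_fscale Heq_contract_delta_word)
  also have "Heq \<dots> (\<Sum>w\<in>supp f. fscale (f w * \<phi> (fa_word w)) ?g)"
  proof (intro Heq_sum)
    fix w
    show "Heq (fscale (f w) (fscale (\<phi> (fa_word w)) (fa_word (b_to_d w)))) (fscale (f w * \<phi> (fa_word w)) ?g)"
      using Heq_fscale[OF Heq_b_to_d] by (cases "\<phi> (fa_word w) = 0") simp_all
  qed
  also have "\<dots> = fscale (\<phi> f) ?g"
    using assms(1) by (simp add: sum_fscale[symmetric] phi_expand[of "supp f"] fsupp_iff_finite_supp)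
  finally show ?thesis .
qed

lemma Heq_contract_fa_Delta:
  assumes "fsupp f" and high: "\<And>K. fst K > n \<Longrightarrow> cfree_hcomp K f \<in> Bideal"
  shows "Heq (contract (fa_Delta f)) (fscale (\<phi> f) (fa_word (a_pow_word p @ d_pow_word q)))"
proof -
  define H where "H = {K \<in> tridegree ` supp f. fst K > n}"
  define R where "R = (\<Sum>K\<in>H. cfree_hcomp K f)"
  have R: "R \<in> Bideal" unfolding R_def H_def by (intro Bideal_sum high) auto
  have fsR: "fsupp R" by (rule Bideal_fsupp[OF R])
  have "GC \<in> set w \<or> b_deg w \<le> n" if "w \<in> supp (f - R)" for w
  proof (rule ccontr)
    assume "\<not> (GC \<in> set w \<or> b_deg w \<le> n)"
    moreover have "finite H" unfolding H_def using assms(1) by (simp add: fsupp_iff_finite_supp)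
    ultimately have "R w = (if tridegree w \<in> H then f w else 0)"
      by (simp add: R_def sum_fun_apply cfree_hcomp_def)
    moreover have "f w \<noteq> 0 \<Longrightarrow> tridegree w \<in> H"
      using \<open>\<not> (GC \<in> set w \<or> b_deg w \<le> n)\<close> by (auto simp: H_def supp_def tridegree_def)
    ultimately show False using that by (auto simp: supp_def split: if_splits)
  qed
  then have "Heq (contract (fa_Delta (f - R))) (fscale (\<phi> (f - R)) (fa_word (a_pow_word p @ d_pow_word q)))"
    using assms(1) fsR by (intro Heq_contract_fa_Delta_low) simp_all
  moreover have "HHeq (fa_Delta f) (fa_Delta (f - R))"
    using fa_Delta_Bideal[OF R] assms(1) fsR by (simp add: HHeq_iff fa_Delta_diff)
  ultimately show ?thesis
    using Heq_contract phi_Bideal[OF R] by (auto simp: phi_diff intro: Heq_trans)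
qed

lemma semi_invariant:
  assumes "is_left_comodule X" and high: "\<And>K j i. fst K > n \<Longrightarrow> cfree_hcomp K (X j i) \<in> Bideal"
    and "\<phi> (X r s) \<noteq> 0"
  shows "semi_invariant_with X (\<lambda>k. \<phi> (X r k)) (fa_word (a_pow_word p @ d_pow_word q))"
proof -
  let ?g = "fa_word (a_pow_word p @ d_pow_word q) :: 'k fa"
  have fsX: "fsupp (X j i)" and com: "HHeq (fa_Delta (X j i)) (\<lambda>uv. \<Sum>k\<in>UNIV. fa_tensor (X j k) (X k i) uv)"
    for j i using assms(1) by (auto simp: is_left_comodule_def)
  have "Heq (\<lambda>v. \<Sum>j\<in>UNIV. \<phi> (X r j) * X j i v) (\<lambda>v. \<phi> (X r i) * ?g v)" for i
  proof -
    let ?T = "\<lambda>uv. \<Sum>k\<in>UNIV. fa_tensor (X r k) (X k i) uv"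
    have "Heq (contract ?T) (contract (fa_Delta (X r i)))"
      by (rule Heq_contract[OF HHeq_sym[OF com]])
    also have "Heq \<dots> (fscale (\<phi> (X r i)) ?g)"
      using fsX high by (rule Heq_contract_fa_Delta)
    finally have "Heq (contract ?T) (fscale (\<phi> (X r i)) ?g)" .
    moreover have T_eq: "?T = (\<Sum>k\<in>UNIV. fa_tensor (X r k) (X k i))"
      by (simp add: fun_eq_iff sum_fun_apply)
    have "contract ?T = (\<lambda>v. \<Sum>j\<in>UNIV. \<phi> (X r j) * X j i v)"
      unfolding T_eq by (simp add: contract_sum contract_tensor fun_eq_iff sum_fun_apply)
    ultimately show ?thesis by (simp add: fscale_def)
  qed
  moreover have "(\<lambda>k. \<phi> (X r k)) \<noteq> (\<lambda>_. 0)" using assms(3) by (auto simp: fun_eq_iff)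
  ultimately show ?thesis
    by (simp add: semi_invariant_with_def grouplike_word[OF pow_words_grouplike])
qed

end

subsection \<open>The top component of a comodule\<close>

lemma cfree_hcomp_add: "cfree_hcomp K (f + g) = cfree_hcomp K f + cfree_hcomp K g"
  by (auto simp: cfree_hcomp_def fun_eq_iff)

lemma cfree_hcomp_fscale: "cfree_hcomp K (fscale c f) = fscale c (cfree_hcomp K f)"
  by (auto simp: cfree_hcomp_def fun_eq_iff)

lemma cfree_hcomp_outside_degrees: "K \<notin> tridegree ` supp f \<Longrightarrow> cfree_hcomp K f = 0"
  by (auto simp: cfree_hcomp_def supp_def fun_eq_iff)

lemma ex_cfree_hcomp_not_in_Bideal:
  assumes "fsupp f" "f \<notin> Bideal"
  shows "\<exists>K. cfree_hcomp K f \<notin> Bideal"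
proof (rule ccontr)
  assume "\<nexists>K. cfree_hcomp K f \<notin> Bideal"
  then have "c_part f + (\<Sum>K\<in>tridegree ` supp f. cfree_hcomp K f) \<in> Bideal"
    using assms(1) by (intro Bideal_add Bideal_sum c_part_Bideal) auto
  with assms show False using fa_decompose_cfree_hcomp[OF assms(1)] by simp
qed

lemma comodule_diag_not_in_Bideal:
  assumes "is_left_comodule X"
  shows "X j j \<notin> Bideal"
proof
  assume "X j j \<in> Bideal"
  then have "fa_eps (X j j) = 0" by (rule fa_eps_Bideal)
  with assms show False by (simp add: is_left_comodule_def)
qed

lemma comodule_top_component:
  assumes "is_left_comodule X"
  obtains n p q j0 i0 where "cfree_hcomp (n, p, q) (X j0 i0) \<notin> Bideal"
    and "\<And>K j i. fst K > n \<Longrightarrow> cfree_hcomp K (X j i) \<in> Bideal"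
proof -
  define Good where "Good = {K. \<exists>j i. cfree_hcomp K (X j i) \<notin> Bideal}"
  have fsX: "fsupp (X j i)" for j i using assms by (simp add: is_left_comodule_def)
  have "Good \<subseteq> tridegree ` (\<Union>j i. supp (X j i))"
  proof
    fix K assume "K \<in> Good"
    then obtain j i where "cfree_hcomp K (X j i) \<notin> Bideal" by (auto simp: Good_def)
    then have "K \<in> tridegree ` supp (X j i)" using cfree_hcomp_outside_degrees by fastforce
    then show "K \<in> tridegree ` (\<Union>j i. supp (X j i))" by blast
  qed
  moreover have "finite (\<Union>j i. supp (X j i))" using fsX by (simp add: fsupp_iff_finite_supp)
  ultimately have fin: "finite Good" by (rule finite_subset[OF _ finite_imageI])
  obtain K where "cfree_hcomp K (X undefined undefined) \<notin> Bideal"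
    using ex_cfree_hcomp_not_in_Bideal[OF fsX comodule_diag_not_in_Bideal[OF assms]] by blast
  then have "K \<in> Good" unfolding Good_def by blast
  then have "Good \<noteq> {}" by blast
  define n where "n = Max (fst ` Good)"
  have "n \<in> fst ` Good" unfolding n_def using fin \<open>Good \<noteq> {}\<close> by (intro Max_in) auto
  then obtain p q where "(n, p, q) \<in> Good" by force
  then obtain j0 i0 where "cfree_hcomp (n, p, q) (X j0 i0) \<notin> Bideal" by (auto simp: Good_def)
  moreover have "cfree_hcomp K (X j i) \<in> Bideal" if "fst K > n" for K j i
  proof -
    have "K \<notin> Good"
    proof
      assume "K \<in> Good"
      then have "fst K \<le> n" unfolding n_def using fin by (intro Max_ge) auto
      with that show False by simp
    qed
    then show ?thesis by (auto simp: Good_def)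
  qed
  ultimately show ?thesis by (rule that)
qed

lemma top_functional_cfree_hcomp:
  assumes "\<And>f g. \<psi> (f + g) = \<psi> f + \<psi> g" "\<And>c f. \<psi> (fscale c f) = c * \<psi> f"
    and "\<And>f. f \<in> Bideal \<Longrightarrow> \<psi> f = 0"
  shows "top_functional (\<lambda>f. \<psi> (cfree_hcomp (n, p, q) f)) n p q"
proof
  show "\<psi> (cfree_hcomp (n, p, q) f) = 0" if "f \<in> Bideal" for f
    using that by (intro assms(3) cfree_hcomp_Bideal)
  show "GC \<notin> set u \<and> tridegree u = (n, p, q)" if "\<psi> (cfree_hcomp (n, p, q) (fa_word u)) \<noteq> 0" for u
    using that assms(3)[OF Bideal_zero] by (auto simp: cfree_hcomp_word split: if_splits)
qed (simp_all add: cfree_hcomp_add cfree_hcomp_fscale assms(1,2))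

theorem mainTheorem16:
  fixes X :: "'n::finite \<Rightarrow> 'n \<Rightarrow> 'k::field fa"
  assumes "alg_closed_field TYPE('k)"
    and "is_left_comodule X"
  shows "\<exists>w g. semi_invariant_with X w g \<and>
           (\<exists>p q :: int. Heq g (fa_word (a_pow_word p @ d_pow_word q)))"
proof -
  obtain n p q j0 i0 where top: "cfree_hcomp (n, p, q) (X j0 i0) \<notin> Bideal"
    and high: "\<And>K j i. fst K > n \<Longrightarrow> cfree_hcomp K (X j i) \<in> Bideal"
    using comodule_top_component[OF assms(2)] by blast
  obtain \<psi> :: "'k fa \<Rightarrow> 'k" where \<psi>: "\<And>f g. \<psi> (f + g) = \<psi> f + \<psi> g" "\<And>c f. \<psi> (fscale c f) = c * \<psi> f"
    "\<And>f. f \<in> Bideal \<Longrightarrow> \<psi> f = 0" "\<psi> (cfree_hcomp (n, p, q) (X j0 i0)) = 1"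
    by (rule separating_functional[OF top]) blast
  interpret top_functional "\<lambda>f. \<psi> (cfree_hcomp (n, p, q) f)" n p q
    by (rule top_functional_cfree_hcomp[OF \<psi>(1-3)])
  have "semi_invariant_with X (\<lambda>k. \<psi> (cfree_hcomp (n, p, q) (X j0 k))) (fa_word (a_pow_word p @ d_pow_word q))"
    using semi_invariant[OF assms(2) high, where r=j0 and s=i0] \<psi>(4) by simp
  then show ?thesis using Heq_refl by blast
qed

end
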